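(* Let $T$ be a complete $L$-theory, $\phi(x,y)$ an $L$-formula and $\mathcal U$ the monster model of $T$. Identify $\phi(a,b)$ with $1$ if it holds and $0$ otherwise. Then the following are equivalent: (i) $\phi$ has NIP for $T$; (ii) for every sequence $(a_i:i<\omega)$ in $\mathcal U$ there is a subsequence $(a_{j_i}:i<\omega)$ such that for every $b\in\mathcal U$ the sequence of truth values $(\phi(a_{j_i},b):i<\omega)$ is eventually constant; (iii) for every sequence $(a_i:i<\omega)$ in $\mathcal U$ there are a subsequence $(a_{j_i}:i<\omega)$ and a natural number $N$ such that $\sum_{i=1}^\infty|\phi(a_{j_i},b)-\phi(a_{j_{i+1}},b)|\le N$ for every $b\in\mathcal U$; (iv) for every sequence $(a_i:i<\omega)$ in $\mathcal U$ there is a subsequence $(a_{j_i}:i<\omega)$ such that the sequence of functions $\phi(a_{j_i},y)$ converges pointwise to a function $f$ which is a difference of bounded semi-continuous functions.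
   Context: $\phi(x,y)$ has NIP for $T$ if there is no sequence $(a_i:i<\omega)$ in $\mathcal U$ such that for every $S\subseteq\omega$ some $b$ satisfies $\phi(a_i,b)\iff i\in S$. For a countable set $A$ of tuples, $\tilde\phi(y,x)=\phi(x,y)$ and $S_{\tilde\phi}(A)$ is the (compact, metrizable) Stone space of complete $\tilde\phi$-types over $A$, i.e. ultrafilters of the Boolean algebra generated by the formulas $\phi(a,y)$, $a\in A$; each $a\in A$ gives a continuous function $\phi(a,y):S_{\tilde\phi}(A)\to\{0,1\}$, $q\mapsto 1$ iff $\phi(a,y)\in q$. In (iv) the functions are regarded on $S_{\tilde\phi}(\{a_{j_i}:i<\omega\})$. A function is DBSC if it equals $F_1-F_2$ with $F_1,F_2$ bounded semi-continuous (upper or lower semi-continuous) functions. *)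

theory Defs
  imports "HOL-Analysis.Analysis"
begin

text \<open>A language L consists of function symbols of type 'f with arities fa and relation
  symbols of type 'r with arities ra. Variables are natural numbers.\<close>

datatype 'f tm = Var nat | Fn 'f "'f tm list"

datatype ('f, 'r) fm =
    Eq "'f tm" "'f tm"
  | Rel 'r "'f tm list"
  | Neg "('f, 'r) fm"
  | Conj "('f, 'r) fm" "('f, 'r) fm"
  | Ex nat "('f, 'r) fm"

fun wf_tm :: "('f \<Rightarrow> nat) \<Rightarrow> 'f tm \<Rightarrow> bool" where
  "wf_tm fa (Var n) = True"
| "wf_tm fa (Fn f ts) = (length ts = fa f \<and> (\<forall>t\<in>set ts. wf_tm fa t))"

fun wf_fm :: "('f \<Rightarrow> nat) \<Rightarrow> ('r \<Rightarrow> nat) \<Rightarrow> ('f, 'r) fm \<Rightarrow> bool" where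
  "wf_fm fa ra (Eq s t) = (wf_tm fa s \<and> wf_tm fa t)"
| "wf_fm fa ra (Rel r ts) = (length ts = ra r \<and> (\<forall>t\<in>set ts. wf_tm fa t))"
| "wf_fm fa ra (Neg \<phi>) = wf_fm fa ra \<phi>"
| "wf_fm fa ra (Conj \<phi> \<psi>) = (wf_fm fa ra \<phi> \<and> wf_fm fa ra \<psi>)"
| "wf_fm fa ra (Ex n \<phi>) = wf_fm fa ra \<phi>"

fun fv_tm :: "'f tm \<Rightarrow> nat set" where
  "fv_tm (Var n) = {n}"
| "fv_tm (Fn f ts) = (\<Union>t\<in>set ts. fv_tm t)"

fun fv :: "('f, 'r) fm \<Rightarrow> nat set" where
  "fv (Eq s t) = fv_tm s \<union> fv_tm t"
| "fv (Rel r ts) = (\<Union>t\<in>set ts. fv_tm t)"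
| "fv (Neg \<phi>) = fv \<phi>"
| "fv (Conj \<phi> \<psi>) = fv \<phi> \<union> fv \<psi>"
| "fv (Ex n \<phi>) = fv \<phi> - {n}"

text \<open>An L-structure with universe the whole type 'm.\<close>

record ('f, 'r, 'm) struc =
  fint :: "'f \<Rightarrow> 'm list \<Rightarrow> 'm"
  rint :: "'r \<Rightarrow> 'm list \<Rightarrow> bool"

fun eval :: "('f, 'r, 'm) struc \<Rightarrow> (nat \<Rightarrow> 'm) \<Rightarrow> 'f tm \<Rightarrow> 'm" where
  "eval M e (Var n) = e n"
| "eval M e (Fn f ts) = fint M f (map (eval M e) ts)"

fun sat :: "('f, 'r, 'm) struc \<Rightarrow> (nat \<Rightarrow> 'm) \<Rightarrow> ('f, 'r) fm \<Rightarrow> bool" where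
  "sat M e (Eq s t) = (eval M e s = eval M e t)"
| "sat M e (Rel r ts) = rint M r (map (eval M e) ts)"
| "sat M e (Neg \<phi>) = (\<not> sat M e \<phi>)"
| "sat M e (Conj \<phi> \<psi>) = (sat M e \<phi> \<and> sat M e \<psi>)"
| "sat M e (Ex n \<phi>) = (\<exists>m. sat M (e(n := m)) \<phi>)"

text \<open>Saturation: every finitely satisfiable set of L(A)-formulas in the free variable 0,
  with |A| < |U|, is realized. A formula over A is a pair (psi, e) where e assigns
  elements of A to the free variables of psi other than 0.\<close>

definition saturated :: "('f \<Rightarrow> nat) \<Rightarrow> ('r \<Rightarrow> nat) \<Rightarrow> ('f, 'r, 'm) struc \<Rightarrow> bool" where
  "saturated fa ra M \<longleftrightarrow>
     (\<forall>(A :: 'm set) (p :: (('f, 'r) fm \<times> (nat \<Rightarrow> 'm)) set).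
        (\<nexists>g :: 'm \<Rightarrow> 'm. inj g \<and> range g \<subseteq> A)
        \<and> (\<forall>(\<psi>, e) \<in> p. wf_fm fa ra \<psi> \<and> (\<forall>v \<in> fv \<psi> - {0}. e v \<in> A))
        \<and> (\<forall>F \<subseteq> p. finite F \<longrightarrow> (\<exists>d. \<forall>(\<psi>, e) \<in> F. sat M (e(0 := d)) \<psi>))
        \<longrightarrow> (\<exists>d. \<forall>(\<psi>, e) \<in> p. sat M (e(0 := d)) \<psi>))"

text \<open>A monster model: saturated, of cardinality strictly bigger than |L| + aleph_0.
  Its complete theory T is Th(M).\<close>

definition monster :: "('f \<Rightarrow> nat) \<Rightarrow> ('r \<Rightarrow> nat) \<Rightarrow> ('f, 'r, 'm) struc \<Rightarrow> bool" where
  "monster fa ra M \<longleftrightarrow> saturated fa ra M \<and> (\<nexists>g :: 'm \<Rightarrow> 'f + 'r + nat. inj g)"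

text \<open>phi(x,y) with x = (v_0,...,v_(k-1)) and y = (v_k,...,v_(k+l-1)); tuples are lists.\<close>

definition holds :: "('f, 'r, 'm) struc \<Rightarrow> nat \<Rightarrow> ('f, 'r) fm \<Rightarrow> 'm list \<Rightarrow> 'm list \<Rightarrow> bool" where
  "holds M k \<phi> a b = sat M (\<lambda>v. if v < k then a ! v else b ! (v - k)) \<phi>"

definition NIP :: "('f, 'r, 'm) struc \<Rightarrow> nat \<Rightarrow> nat \<Rightarrow> ('f, 'r) fm \<Rightarrow> bool" where
  "NIP M k l \<phi> \<longleftrightarrow>
     \<not> (\<exists>a :: nat \<Rightarrow> 'm list. (\<forall>i. length (a i) = k) \<and>
          (\<forall>S :: nat set. \<exists>b. length b = l \<and> (\<forall>i. holds M k \<phi> (a i) b \<longleftrightarrow> i \<in> S)))"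

text \<open>A complete phi~-type over A is a consistent choice, for every a in A, of phi(a,y) or
  its negation; consistency with T = Th(M) means every finite part is realized in M.
  It is represented by the truth-value function q on A (a point of 2^A).\<close>

definition phi_types ::
  "('f, 'r, 'm) struc \<Rightarrow> nat \<Rightarrow> nat \<Rightarrow> ('f, 'r) fm \<Rightarrow> 'm list set \<Rightarrow> ('m list \<Rightarrow> bool) set" where
  "phi_types M k l \<phi> A =
     {q \<in> PiE A (\<lambda>_. UNIV). \<forall>F \<subseteq> A. finite F \<longrightarrow>
        (\<exists>b. length b = l \<and> (\<forall>a \<in> F. q a = holds M k \<phi> a b))}"

definition phi_type_space ::
  "('f, 'r, 'm) struc \<Rightarrow> nat \<Rightarrow> nat \<Rightarrow> ('f, 'r) fm \<Rightarrow> 'm list set \<Rightarrow> ('m list \<Rightarrow> bool) topology" where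
  "phi_type_space M k l \<phi> A =
     subtopology (product_topology (\<lambda>_. discrete_topology UNIV) A) (phi_types M k l \<phi> A)"

definition usc_on :: "'a topology \<Rightarrow> ('a \<Rightarrow> real) \<Rightarrow> bool" where
  "usc_on X f \<longleftrightarrow> (\<forall>c. openin X {x \<in> topspace X. f x < c})"

definition lsc_on :: "'a topology \<Rightarrow> ('a \<Rightarrow> real) \<Rightarrow> bool" where
  "lsc_on X f \<longleftrightarrow> (\<forall>c. openin X {x \<in> topspace X. f x > c})"

definition bounded_fun_on :: "'a topology \<Rightarrow> ('a \<Rightarrow> real) \<Rightarrow> bool" where
  "bounded_fun_on X f \<longleftrightarrow> (\<exists>B. \<forall>x \<in> topspace X. \<bar>f x\<bar> \<le> B)"

definition bsc_on :: "'a topology \<Rightarrow> ('a \<Rightarrow> real) \<Rightarrow> bool" where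
  "bsc_on X f \<longleftrightarrow> bounded_fun_on X f \<and> (usc_on X f \<or> lsc_on X f)"

definition DBSC :: "'a topology \<Rightarrow> ('a \<Rightarrow> real) \<Rightarrow> bool" where
  "DBSC X f \<longleftrightarrow> (\<exists>F1 F2. bsc_on X F1 \<and> bsc_on X F2 \<and> (\<forall>x \<in> topspace X. f x = F1 x - F2 x))"

end

(*
  If phi has NIP, every sequence (a_i) has a subsequence along which the truth values of
  phi(a_j_i, b) change sign at most m times, for one m and all b.  Otherwise Ramsey's theorem,
  applied to the patterns realized by the n-element subsets of the index set, yields shattered
  sets of every finite size, and saturation (used one k-tuple at a time over countable parameter
  sets) turns them into an infinite shattered sequence.  The uniform bound gives (ii) and (iii)
  at once, and (iv) on the type space: the limit is the number of rises minus the number of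
  falls, and both are bounded lower semicontinuous functions of the type.  Conversely, if phi
  has IP, some sequence admits, along each of its subsequences, a parameter realizing the
  alternating pattern, and the alternating sequence violates (ii), (iii) and (iv).
*)

theory Submission
  imports Defs "HOL-Library.Ramsey"
begin

fun rename_tm :: "(nat \<Rightarrow> nat) \<Rightarrow> 'f tm \<Rightarrow> 'f tm" where
  "rename_tm r (Var n) = Var (r n)"
| "rename_tm r (Fn f ts) = Fn f (map (rename_tm r) ts)"

fun rename :: "(nat \<Rightarrow> nat) \<Rightarrow> ('f, 'r) fm \<Rightarrow> ('f, 'r) fm" where
  "rename r (Eq s t) = Eq (rename_tm r s) (rename_tm r t)"
| "rename r (Rel p ts) = Rel p (map (rename_tm r) ts)"
| "rename r (Neg \<psi>) = Neg (rename r \<psi>)"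
| "rename r (Conj \<psi> \<xi>) = Conj (rename r \<psi>) (rename r \<xi>)"
| "rename r (Ex n \<psi>) = Ex (r n) (rename r \<psi>)"

lemma eval_rename_tm: "eval M e (rename_tm r t) = eval M (e \<circ> r) t"
  by (induction t) (auto intro!: arg_cong[where f = "fint M _"])

lemma wf_tm_rename_tm [simp]: "wf_tm fa (rename_tm r t) = wf_tm fa t"
  by (induction t) auto

lemma wf_fm_rename [simp]: "wf_fm fa ra (rename r \<psi>) = wf_fm fa ra \<psi>"
  by (induction \<psi>) auto

lemma sat_rename:
  assumes "inj r"
  shows "sat M e (rename r \<psi>) = sat M (e \<circ> r) \<psi>"
proof (induction \<psi> arbitrary: e)
  case (Ex n \<psi>)
  have upd: "e(r n := m) \<circ> r = (e \<circ> r)(n := m)" for m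
    using assms by (auto simp: inj_def)
  have "sat M e (rename r (Ex n \<psi>)) = (\<exists>m. sat M (e(r n := m) \<circ> r) \<psi>)"
    by (simp only: rename.simps sat.simps Ex.IH)
  then show ?case
    by (simp only: upd sat.simps)
qed (simp_all add: eval_rename_tm comp_def)

lemma eval_cong: "\<forall>v\<in>fv_tm t. e v = e' v \<Longrightarrow> eval M e t = eval M e' t"
  by (induction t) (auto intro!: arg_cong[where f = "fint M _"])

lemma sat_cong: "\<forall>v\<in>fv \<psi>. e v = e' v \<Longrightarrow> sat M e \<psi> = sat M e' \<psi>"
proof (induction \<psi> arbitrary: e e')
  case (Eq s t)
  then show ?case
    using eval_cong[of s e e' M] eval_cong[of t e e' M] by auto
next
  case (Rel p ts)
  have "eval M e t = eval M e' t" if "t \<in> set ts" for t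
    using Rel.prems that by (intro eval_cong) auto
  then show ?case
    by (simp cong: map_cong)
next
  case (Ex n \<psi>)
  then have "sat M (e(n := m)) \<psi> = sat M (e'(n := m)) \<psi>" for m
    by auto
  then show ?case
    by simp
next
  case (Conj \<psi>1 \<psi>2)
  then have "sat M e \<psi>1 = sat M e' \<psi>1" "sat M e \<psi>2 = sat M e' \<psi>2"
    by auto
  then show ?case
    by simp
qed auto

section \<open>Definable predicates on assignments\<close>

definition definable :: "('f \<Rightarrow> nat) \<Rightarrow> ('r \<Rightarrow> nat) \<Rightarrow> ('f, 'r, 'm) struc \<Rightarrow> nat set \<Rightarrow> 'm set
    \<Rightarrow> ((nat \<Rightarrow> 'm) \<Rightarrow> bool) \<Rightarrow> bool" where
  "definable fa ra M V A P \<longleftrightarrow> (\<exists>\<psi> e. wf_fm fa ra \<psi> \<and> range e \<subseteq> A \<and>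
      (\<forall>d. P d = sat M (\<lambda>v. if v \<in> V then d v else e v) \<psi>))"

lemma definable_Not: "definable fa ra M V A P \<Longrightarrow> definable fa ra M V A (\<lambda>d. \<not> P d)"
  unfolding definable_def by (metis sat.simps(3) wf_fm.simps(3))

lemma definable_True: "c \<in> A \<Longrightarrow> definable fa ra M V A (\<lambda>d. True)"
  unfolding definable_def by (rule exI[of _ "Eq (Var 0) (Var 0)"], rule exI[of _ "\<lambda>_. c"]) auto

lemma sat_rename_params:
  assumes "inj r" "\<And>v. v \<in> V \<Longrightarrow> r v = v" "\<And>v. v \<notin> V \<Longrightarrow> r v \<notin> V \<and> e' (r v) = e v"
  shows "sat M (\<lambda>v. if v \<in> V then d v else e' v) (rename r \<psi>) =
    sat M (\<lambda>v. if v \<in> V then d v else e v) \<psi>"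
proof -
  have "(\<lambda>v. if v \<in> V then d v else e' v) \<circ> r = (\<lambda>v. if v \<in> V then d v else e v)"
    using assms(2,3) by fastforce
  then show ?thesis
    by (simp add: sat_rename[OF assms(1)])
qed

lemma inj_shift_outside:
  fixes V :: "nat set"
  assumes "\<forall>v\<in>V. v < N"
  shows "inj (\<lambda>v. if v \<in> V then v else N + 2 * v + b)"
  by (rule injI) (use assms in \<open>auto split: if_splits\<close>)

lemma definable_conj:
  assumes "finite V" "definable fa ra M V A P" "definable fa ra M V A Q"
  shows "definable fa ra M V A (\<lambda>d. P d \<and> Q d)"
proof -
  obtain \<psi>1 e1 where 1: "wf_fm fa ra \<psi>1" "range e1 \<subseteq> A"
    "\<And>d. P d = sat M (\<lambda>v. if v \<in> V then d v else e1 v) \<psi>1"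
    using assms(2) unfolding definable_def by blast
  obtain \<psi>2 e2 where 2: "wf_fm fa ra \<psi>2" "range e2 \<subseteq> A"
    "\<And>d. Q d = sat M (\<lambda>v. if v \<in> V then d v else e2 v) \<psi>2"
    using assms(3) unfolding definable_def by blast
  obtain N where N: "\<forall>v\<in>V. v < N"
    using assms(1) finite_nat_bounded by (metis lessThan_iff subsetD)
  \<comment> \<open>the parameters of the two formulas are moved to the even and odd slots above N\<close>
  define r1 where "r1 v = (if v \<in> V then v else N + 2 * v + 0)" for v
  define r2 where "r2 v = (if v \<in> V then v else N + 2 * v + 1)" for v
  define e where "e w = (if N \<le> w then (if even (w - N) then e1 ((w - N) div 2)
    else e2 ((w - N) div 2)) else e1 w)" for w
  have "sat M (\<lambda>v. if v \<in> V then d v else e v) (rename r1 \<psi>1) = P d" for d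
    unfolding 1(3) r1_def
    by (rule sat_rename_params[OF inj_shift_outside[OF N]]) (use N in \<open>auto simp: e_def\<close>)
  moreover have "sat M (\<lambda>v. if v \<in> V then d v else e v) (rename r2 \<psi>2) = Q d" for d
    unfolding 2(3) r2_def
    by (rule sat_rename_params[OF inj_shift_outside[OF N]]) (use N in \<open>auto simp: e_def\<close>)
  moreover have "range e \<subseteq> A"
    using 1(2) 2(2) by (auto simp: e_def)
  ultimately show ?thesis
    unfolding definable_def using 1(1) 2(1)
    by (intro exI[of _ "Conj (rename r1 \<psi>1) (rename r2 \<psi>2)"] exI[of _ e]) simp
qed

lemma definable_Ball:
  assumes "finite V" "c \<in> A" "finite I" "\<And>i. i \<in> I \<Longrightarrow> definable fa ra M V A (P i)"
  shows "definable fa ra M V A (\<lambda>d. \<forall>i\<in>I. P i d)"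
  using assms(3,4)
proof (induction I rule: finite_induct)
  case empty
  then show ?case
    using definable_True[OF assms(2)] by simp
next
  case (insert i I)
  then have "definable fa ra M V A (\<lambda>d. P i d \<and> (\<forall>i\<in>I. P i d))"
    by (intro definable_conj assms(1)) auto
  then show ?case
    by simp
qed

lemma definable_empty_const: "definable fa ra M {} A P \<Longrightarrow> P d = P d'"
  unfolding definable_def by auto

lemma definable_Ex:
  assumes "definable fa ra M V A P" "v \<in> V"
  shows "definable fa ra M (V - {v}) A (\<lambda>d. \<exists>x. P (d(v := x)))"
proof -
  obtain \<psi> e where \<psi>: "wf_fm fa ra \<psi>" "range e \<subseteq> A"
    "\<And>d. P d = sat M (\<lambda>v. if v \<in> V then d v else e v) \<psi>"
    using assms(1) unfolding definable_def by blast
  have "(\<lambda>w. if w \<in> V - {v} then d w else e w)(v := x) =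
      (\<lambda>w. if w \<in> V then (d(v := x)) w else e w)" for d x
    using assms(2) by auto
  then show ?thesis
    unfolding definable_def using \<psi> by (intro exI[of _ "Ex v \<psi>"] exI[of _ e]) simp
qed

lemma definable_Ex_set:
  assumes "finite W" "W \<subseteq> V" "definable fa ra M V A P"
  shows "definable fa ra M (V - W) A (\<lambda>d. \<exists>d'. P (\<lambda>v. if v \<in> W then d' v else d v))"
  using assms(1,2)
proof (induction W rule: finite_induct)
  case empty
  then show ?case
    using assms(3) by simp
next
  case (insert w W)
  then have "definable fa ra M (V - W - {w}) A
      (\<lambda>d. \<exists>x d'. P (\<lambda>v. if v \<in> W then d' v else (d(w := x)) v))"
    by (intro definable_Ex) auto
  moreover have "(\<exists>x d'. P (\<lambda>v. if v \<in> W then d' v else (d(w := x)) v)) =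
      (\<exists>d'. P (\<lambda>v. if v \<in> insert w W then d' v else d v))" for d
  proof
    assume "\<exists>x d'. P (\<lambda>v. if v \<in> W then d' v else (d(w := x)) v)"
    then obtain x d' where "P (\<lambda>v. if v \<in> W then d' v else (d(w := x)) v)"
      by blast
    moreover have "(\<lambda>v. if v \<in> W then d' v else (d(w := x)) v) =
        (\<lambda>v. if v \<in> insert w W then (d'(w := x)) v else d v)"
      using insert.hyps(2) by auto
    ultimately show "\<exists>d'. P (\<lambda>v. if v \<in> insert w W then d' v else d v)"
      by auto
  next
    assume "\<exists>d'. P (\<lambda>v. if v \<in> insert w W then d' v else d v)"
    then obtain d' where "P (\<lambda>v. if v \<in> insert w W then d' v else d v)"
      by blast
    moreover have "(\<lambda>v. if v \<in> insert w W then d' v else d v) =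
        (\<lambda>v. if v \<in> W then d' v else (d(w := d' w)) v)"
      by auto
    ultimately show "\<exists>x d'. P (\<lambda>v. if v \<in> W then d' v else (d(w := x)) v)"
      by metis
  qed
  moreover have "V - W - {w} = V - insert w W"
    by auto
  ultimately show ?case
    by simp
qed

lemma inj_variables_then_shift:
  fixes h :: "nat \<Rightarrow> nat + 'c"
  assumes inj: "inj_on h {v. v < K \<and> isl (h v)}"
    and below: "\<And>v. v < K \<Longrightarrow> isl (h v) \<Longrightarrow> projl (h v) < N"
  shows "inj (\<lambda>v. if v < K \<and> isl (h v) then projl (h v) else N + v)"
proof (rule injI)
  fix x y assume eq: "(if x < K \<and> isl (h x) then projl (h x) else N + x) =
    (if y < K \<and> isl (h y) then projl (h y) else N + y)"
  consider "x < K \<and> isl (h x)" "y < K \<and> isl (h y)"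
    | "\<not> (x < K \<and> isl (h x))" "\<not> (y < K \<and> isl (h y))"
    | "(x < K \<and> isl (h x)) \<noteq> (y < K \<and> isl (h y))"
    by blast
  then show "x = y"
  proof cases
    case 1
    then have "projl (h x) = projl (h y)"
      using eq by simp
    then have "h x = h y"
      using 1 by (cases "h x"; cases "h y") auto
    then show ?thesis
      using 1 inj by (auto dest: inj_onD)
  next
    case 2
    then show ?thesis
      using eq by (auto split: if_splits)
  next
    case 3
    then show ?thesis
      using eq below[of x] below[of y] by (auto split: if_splits)
  qed
qed

lemma definable_sat_subst:
  assumes "wf_fm fa ra \<psi>" "fv \<psi> \<subseteq> {..<K}" "c \<in> A" "finite V"
    and h: "\<forall>v<K. case h v of Inl p \<Rightarrow> p \<in> V | Inr c \<Rightarrow> c \<in> A"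
    and inj: "inj_on h {v. v < K \<and> isl (h v)}"
  shows "definable fa ra M V A (\<lambda>d. sat M (case_sum d id \<circ> h) \<psi>)"
proof -
  obtain N where N: "\<forall>v\<in>V. v < N"
    using assms(4) finite_nat_bounded by (metis lessThan_iff subsetD)
  \<comment> \<open>variables sent to parameters are moved to the slots above N\<close>
  define r where "r v = (if v < K \<and> isl (h v) then projl (h v) else N + v)" for v
  define e where "e w = (if N \<le> w \<and> w - N < K \<and> \<not> isl (h (w - N)) then projr (h (w - N)) else c)"
    for w
  have in_V: "projl (h v) \<in> V" if "v < K" "isl (h v)" for v
    using h that by (cases "h v") auto
  have r_var: "r v = projl (h v)" if "v < K" "isl (h v)" for v
    using that by (simp add: r_def)
  have r_param: "r v = N + v" if "\<not> (v < K \<and> isl (h v))" for v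
    using that unfolding r_def by presburger
  have "inj r"
    unfolding r_def by (rule inj_variables_then_shift[OF inj]) (use in_V N in blast)
  have "range e \<subseteq> A"
    using h assms(3) by (auto simp: e_def split: sum.splits)
  moreover have "sat M (\<lambda>v. if v \<in> V then d v else e v) (rename r \<psi>) = sat M (case_sum d id \<circ> h) \<psi>"
    for d
  proof -
    have "((\<lambda>v. if v \<in> V then d v else e v) \<circ> r) v = (case_sum d id \<circ> h) v" if "v < K" for v
    proof (cases "h v")
      case (Inl p)
      then show ?thesis
        using that in_V[of v] r_var[of v] by simp
    next
      case (Inr c)
      then have "N + v \<notin> V"
        using N by auto
      then show ?thesis
        using that Inr r_param by (simp add: e_def)
    qed
    then show ?thesis
      unfolding sat_rename[OF \<open>inj r\<close>] using assms(2) by (intro sat_cong ballI) blast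
  qed
  ultimately show ?thesis
    unfolding definable_def using assms(1) by (intro exI[of _ "rename r \<psi>"] exI[of _ e]) simp
qed

lemma definable_holds:
  assumes "wf_fm fa ra \<psi>" "fv \<psi> \<subseteq> {..<k + l}" "c \<in> A" "finite V"
    and "\<forall>v<k + l. case h v of Inl p \<Rightarrow> p \<in> V | Inr c \<Rightarrow> c \<in> A"
    and "inj_on h {v. v < k + l \<and> isl (h v)}"
  shows "definable fa ra M V A
    (\<lambda>d. holds M k \<psi> (map (case_sum d id \<circ> h) [0..<k]) (map (case_sum d id \<circ> h) [k..<k + l]))"
proof -
  have "holds M k \<psi> (map (case_sum d id \<circ> h) [0..<k]) (map (case_sum d id \<circ> h) [k..<k + l]) =
      sat M (case_sum d id \<circ> h) \<psi>" for d
    unfolding holds_def using assms(2) by (intro sat_cong) (auto simp: nth_append)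
  then show ?thesis
    using definable_sat_subst[OF assms] by simp
qed

lemma definable_instantiate:
  assumes "definable fa ra M (insert v V) A R" "v \<notin> V"
  shows "definable fa ra M {v} (A \<union> d0 ` V) (\<lambda>d. R (d0(v := d v)))"
proof -
  obtain \<psi> e where \<psi>: "wf_fm fa ra \<psi>" "range e \<subseteq> A"
    "\<And>d. R d = sat M (\<lambda>w. if w \<in> insert v V then d w else e w) \<psi>"
    using assms(1) unfolding definable_def by blast
  define e' where "e' w = (if w \<in> V then d0 w else e w)" for w
  have "(\<lambda>w. if w \<in> insert v V then (d0(v := d v)) w else e w) =
      (\<lambda>w. if w \<in> {v} then d w else e' w)" for d
    using assms(2) by (auto simp: e'_def)
  moreover have "range e' \<subseteq> A \<union> d0 ` V"
    using \<psi>(2) by (auto simp: e'_def)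
  ultimately show ?thesis
    unfolding definable_def using \<psi> by (intro exI[of _ \<psi>] exI[of _ e']) simp
qed

lemma definable_projection:
  assumes "finite (insert v V)" "c \<in> A" "v \<notin> V" "finite F"
    and "\<And>P. P \<in> F \<Longrightarrow> definable fa ra M (insert v V) A P"
  shows "definable fa ra M V A (\<lambda>d. \<exists>x. \<forall>P\<in>F. P (d(v := x)))"
proof -
  have "definable fa ra M (insert v V) A (\<lambda>d. \<forall>P\<in>F. P d)"
    using assms(5) by (intro definable_Ball[OF assms(1,2,4)])
  then have "definable fa ra M (insert v V - {v}) A (\<lambda>d. \<exists>x. \<forall>P\<in>F. P (d(v := x)))"
    by (rule definable_Ex[where P = "\<lambda>d. \<forall>P\<in>F. P d"]) simp
  then show ?thesis
    using assms(3) by simp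
qed

section \<open>Realizing finitely satisfiable definable families\<close>

lemma countable_small_in_monster:
  fixes M :: "('f, 'r, 'm) struc"
  assumes "monster fa ra M" "countable B"
  shows "\<nexists>g :: 'm \<Rightarrow> 'm. inj g \<and> range g \<subseteq> B"
proof
  assume "\<exists>g :: 'm \<Rightarrow> 'm. inj g \<and> range g \<subseteq> B"
  then obtain g :: "'m \<Rightarrow> 'm" where g: "inj g" "range g \<subseteq> B"
    by blast
  then have "countable (UNIV :: 'm set)"
    using assms(2) countable_subset countable_image_inj_on by blast
  then obtain f :: "'m \<Rightarrow> nat" where "inj f"
    by (metis countableE)
  then have "inj (\<lambda>x. Inr (Inr (f x)) :: 'f + 'r + nat)"
    by (auto simp: inj_def)
  then show False
    using assms(1) unfolding monster_def by blast
qed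

definition finitely_satisfiable :: "('a \<Rightarrow> bool) set \<Rightarrow> bool" where
  "finitely_satisfiable PP \<longleftrightarrow> (\<forall>F\<subseteq>PP. finite F \<longrightarrow> (\<exists>x. \<forall>P\<in>F. P x))"

lemma finitely_satisfiable_projections:
  assumes "finitely_satisfiable PP"
  shows "finitely_satisfiable ((\<lambda>F d. \<exists>x. \<forall>P\<in>F. P (d(v := x))) ` {F. F \<subseteq> PP \<and> finite F})"
  unfolding finitely_satisfiable_def
proof (intro allI impI)
  fix G assume "G \<subseteq> (\<lambda>F d. \<exists>x. \<forall>P\<in>F. P (d(v := x))) ` {F. F \<subseteq> PP \<and> finite F}" "finite G"
  then obtain FF where FF: "FF \<subseteq> {F. F \<subseteq> PP \<and> finite F}" "finite FF"
    "G = (\<lambda>F d. \<exists>x. \<forall>P\<in>F. P (d(v := x))) ` FF"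
    by (meson finite_subset_image)
  then have "\<Union>FF \<subseteq> PP" "finite (\<Union>FF)"
    by auto
  then obtain d where "\<forall>P\<in>\<Union>FF. P d"
    using assms unfolding finitely_satisfiable_def by blast
  then have "\<forall>F\<in>FF. \<exists>x. \<forall>P\<in>F. P (d(v := x))"
    by (intro ballI exI[of _ "d v"]) auto
  then have "\<forall>R\<in>G. R d"
    unfolding FF(3) by simp
  then show "\<exists>d. \<forall>R\<in>G. R d"
    by (rule exI[where x = d])
qed

lemma finitely_satisfiable_instances:
  assumes "\<And>F. F \<subseteq> PP \<Longrightarrow> finite F \<Longrightarrow> \<exists>x. \<forall>P\<in>F. P (d0(v := x))"
  shows "finitely_satisfiable ((\<lambda>P d. P (d0(v := d v))) ` PP)"
  unfolding finitely_satisfiable_def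
proof (intro allI impI)
  fix G assume "G \<subseteq> (\<lambda>P d. P (d0(v := d v))) ` PP" "finite G"
  then obtain F where F: "F \<subseteq> PP" "finite F" "G = (\<lambda>P d. P (d0(v := d v))) ` F"
    by (meson finite_subset_image)
  then obtain x where "\<forall>P\<in>F. P (d0(v := x))"
    using assms by blast
  then show "\<exists>d. \<forall>P'\<in>G. P' d"
    using F(3) by (intro exI[of _ "\<lambda>_. x"]) auto
qed

lemma definable_singleton_normal_form:
  assumes "definable fa ra M {v} A P"
  shows "\<exists>\<psi> e. wf_fm fa ra \<psi> \<and> range e \<subseteq> A \<and> (\<forall>d. P d = sat M (e(0 := d v)) \<psi>)"
proof -
  obtain \<psi> e where \<psi>: "wf_fm fa ra \<psi>" "range e \<subseteq> A"
    "\<And>d. P d = sat M (\<lambda>w. if w \<in> {v} then d w else e w) \<psi>"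
    using assms unfolding definable_def by blast
  define \<tau> where "\<tau> = Transposition.transpose v 0"
  have "(e \<circ> \<tau>)(0 := x) \<circ> \<tau> = e(v := x)" for x
  proof
    fix w
    show "((e \<circ> \<tau>)(0 := x) \<circ> \<tau>) w = (e(v := x)) w"
      by (cases "w = v"; cases "w = 0") (simp_all add: \<tau>_def)
  qed
  moreover have "(\<lambda>w. if w \<in> {v} then d w else e w) = e(v := d v)" for d
    by auto
  ultimately have "sat M ((e \<circ> \<tau>)(0 := d v)) (rename \<tau> \<psi>) = P d" for d
    unfolding \<psi>(3) sat_rename[OF inj_transpose[of v 0, folded \<tau>_def]] by simp
  moreover have "range (e \<circ> \<tau>) \<subseteq> A"
    using \<psi>(2) by auto
  ultimately show ?thesis
    using \<psi>(1) by (intro exI[of _ "rename \<tau> \<psi>"] exI[of _ "e \<circ> \<tau>"]) auto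
qed

lemma realize_definable_singleton:
  fixes M :: "('f, 'r, 'm) struc"
  assumes "monster fa ra M" "countable A"
    and "\<forall>P\<in>PP. definable fa ra M {v} A P" and "finitely_satisfiable PP"
  shows "\<exists>d. \<forall>P\<in>PP. P d"
proof -
  have "\<forall>P\<in>PP. \<exists>\<psi> e. wf_fm fa ra \<psi> \<and> range e \<subseteq> A \<and> (\<forall>d. P d = sat M (e(0 := d v)) \<psi>)"
    using assms(3) by (intro ballI definable_singleton_normal_form) blast
  from bchoice[OF this] obtain \<Psi> where "\<forall>P\<in>PP. \<exists>e. wf_fm fa ra (\<Psi> P) \<and> range e \<subseteq> A \<and>
      (\<forall>d. P d = sat M (e(0 := d v)) (\<Psi> P))"
    by blast
  from bchoice[OF this] obtain E where \<Psi>E: "\<forall>P\<in>PP. wf_fm fa ra (\<Psi> P) \<and> range (E P) \<subseteq> A \<and>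
      (\<forall>d. P d = sat M ((E P)(0 := d v)) (\<Psi> P))"
    by blast
  then have sat_\<Psi>: "sat M ((E P)(0 := d v)) (\<Psi> P) = P d" if "P \<in> PP" for P d
    using that by simp
  define p where "p = (\<lambda>P. (\<Psi> P, E P)) ` PP"
  have wf: "\<forall>(\<psi>, e) \<in> p. wf_fm fa ra \<psi> \<and> (\<forall>w \<in> fv \<psi> - {0}. e w \<in> A)"
    using \<Psi>E by (auto simp: p_def)
  have finsat: "\<forall>F \<subseteq> p. finite F \<longrightarrow> (\<exists>x. \<forall>(\<psi>, e) \<in> F. sat M (e(0 := x)) \<psi>)"
  proof (intro allI impI)
    fix F assume "F \<subseteq> p" "finite F"
    then obtain G where G: "G \<subseteq> PP" "finite G" "F = (\<lambda>P. (\<Psi> P, E P)) ` G"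
      unfolding p_def by (meson finite_subset_image)
    then obtain d where "\<forall>P\<in>G. P d"
      using assms(4) unfolding finitely_satisfiable_def by blast
    then have "\<forall>P\<in>G. sat M ((E P)(0 := d v)) (\<Psi> P)"
      using G(1) sat_\<Psi> by auto
    then show "\<exists>x. \<forall>(\<psi>, e) \<in> F. sat M (e(0 := x)) \<psi>"
      unfolding G(3) by auto
  qed
  have "saturated fa ra M"
    using assms(1) by (simp add: monster_def)
  then have "\<exists>x. \<forall>(\<psi>, e) \<in> p. sat M (e(0 := x)) \<psi>"
    unfolding saturated_def
    by (elim allE[of _ A] allE[of _ p] mp) (intro conjI countable_small_in_monster[OF assms(1,2)] wf finsat)
  then obtain x where "\<forall>(\<psi>, e) \<in> p. sat M (e(0 := x)) \<psi>"
    by blast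
  then have "\<forall>P\<in>PP. P (\<lambda>_. x)"
    using sat_\<Psi>[of _ "\<lambda>_. x"] by (auto simp: p_def)
  then show ?thesis
    by (rule exI[where x = "\<lambda>_. x"])
qed

lemma realize_definable:
  fixes M :: "('f, 'r, 'm) struc"
  assumes "monster fa ra M" "countable A" "c \<in> A" "finite V"
    and "\<forall>P\<in>PP. definable fa ra M V A P" and "finitely_satisfiable PP"
  shows "\<exists>d. \<forall>P\<in>PP. P d"
  using assms(4-6)
proof (induction V arbitrary: PP rule: finite_induct)
  case empty
  have "P undefined" if "P \<in> PP" for P
  proof -
    have "\<exists>d. P d"
      using empty.prems(2) that unfolding finitely_satisfiable_def by (elim allE[of _ "{P}"]) simp
    then obtain d where "P d"
      by blast
    moreover have "definable fa ra M {} A P"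
      using empty.prems(1) that by blast
    ultimately show "P undefined"
      using definable_empty_const[where d = d and d' = undefined] by blast
  qed
  then show ?case
    by (intro exI[where x = undefined] ballI)
next
  case (insert v V)
  \<comment> \<open>first realize the projections of the finite conjunctions, then the remaining variable v\<close>
  define Q :: "((nat \<Rightarrow> 'm) \<Rightarrow> bool) set \<Rightarrow> (nat \<Rightarrow> 'm) \<Rightarrow> bool"
    where "Q F d \<longleftrightarrow> (\<exists>x. \<forall>P\<in>F. P (d(v := x)))" for F d
  define FS where "FS = {F. F \<subseteq> PP \<and> finite F}"
  have "definable fa ra M V A (Q F)" if "F \<in> FS" for F
    unfolding Q_def using that insert.prems(1) insert.hyps
    by (intro definable_projection[OF _ assms(3)]) (auto simp: FS_def)
  moreover have "finitely_satisfiable (Q ` FS)"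
    unfolding Q_def FS_def by (rule finitely_satisfiable_projections[OF insert.prems(2)])
  ultimately have "\<exists>d. \<forall>R\<in>Q ` FS. R d"
    by (intro insert.IH) blast+
  then obtain d0 where d0_Q: "\<forall>R\<in>Q ` FS. R d0"
    by blast
  have d0: "\<exists>x. \<forall>P\<in>F. P (d0(v := x))" if "F \<subseteq> PP" "finite F" for F
  proof -
    have "Q F d0"
      using d0_Q that by (simp add: FS_def)
    then show ?thesis
      unfolding Q_def .
  qed
  have "\<exists>d. \<forall>P'\<in>(\<lambda>P d. P (d0(v := d v))) ` PP. P' d"
  proof (rule realize_definable_singleton[OF assms(1)])
    show "countable (A \<union> d0 ` V)"
      using assms(2) insert.hyps(1) by (simp add: countable_finite)
    show "\<forall>P'\<in>(\<lambda>P d. P (d0(v := d v))) ` PP. definable fa ra M {v} (A \<union> d0 ` V) P'"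
      using insert.prems(1) definable_instantiate[OF _ insert.hyps(2)] by blast
    show "finitely_satisfiable ((\<lambda>P d. P (d0(v := d v))) ` PP)"
      using d0 by (rule finitely_satisfiable_instances)
  qed
  then obtain d1 where "\<forall>P'\<in>(\<lambda>P d. P (d0(v := d v))) ` PP. P' d1"
    by blast
  then have "\<forall>P\<in>PP. P (d0(v := d1 v))"
    by simp
  then show ?case
    by (rule exI[where x = "d0(v := d1 v)"])
qed

section \<open>Shattered sequences of tuples\<close>

definition shatters :: "('a \<Rightarrow> 'b \<Rightarrow> bool) \<Rightarrow> 'b set \<Rightarrow> (nat \<Rightarrow> 'a) \<Rightarrow> nat \<Rightarrow> bool" where
  "shatters R B c n \<longleftrightarrow> (\<forall>S\<subseteq>{..<n}. \<exists>b\<in>B. \<forall>i<n. R (c i) b = (i \<in> S))"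

lemma shatters_mono:
  assumes "shatters R B c m" "n \<le> m"
  shows "shatters R B c n"
  unfolding shatters_def
proof (intro allI impI)
  fix S assume "S \<subseteq> {..<n}"
  then have "S \<subseteq> {..<m}"
    using assms(2) by auto
  then obtain b where "b \<in> B" "\<forall>i<m. R (c i) b = (i \<in> S)"
    using assms(1) unfolding shatters_def by blast
  then show "\<exists>b\<in>B. \<forall>i<n. R (c i) b = (i \<in> S)"
    using assms(2) by (intro bexI[of _ b]) auto
qed

lemma shatters_cong: "(\<And>i. i < n \<Longrightarrow> c i = c' i) \<Longrightarrow> shatters R B c n = shatters R B c' n"
  unfolding shatters_def by simp

text \<open>A sequence of k-tuples stored in one sequence of elements, so that its entries can be
  addressed by variables.\<close>

definition block :: "nat \<Rightarrow> (nat \<Rightarrow> 'm) \<Rightarrow> nat \<Rightarrow> 'm list" where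
  "block k D i = map (\<lambda>v. D (k * i + v)) [0..<k]"

lemma length_block [simp]: "length (block k D i) = k"
  by (simp add: block_def)

lemma block_index_less:
  assumes "i < n" "v < k"
  shows "k * i + v < k * (n :: nat)"
proof -
  have "k * i + v < k * Suc i"
    using assms(2) by simp
  also have "\<dots> \<le> k * n"
    using assms(1) by (intro mult_le_mono2) simp
  finally show ?thesis .
qed

lemma shatters_block_cong:
  "(\<And>p. p < k * n \<Longrightarrow> D p = D' p) \<Longrightarrow> shatters R B (block k D) n = shatters R B (block k D') n"
  by (intro shatters_cong) (auto simp: block_def block_index_less)

lemma block_exists:
  assumes "\<forall>i. length (c i) = k"
  shows "\<exists>D. \<forall>i. block k D i = c i"
proof (cases "k = 0")
  case True
  then show ?thesis
    using assms by (simp add: block_def)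
next
  case False
  have "block k (\<lambda>p. c (p div k) ! (p mod k)) i = c i" for i
    using assms False by (intro nth_equalityI) (auto simp: block_def)
  then show ?thesis
    by blast
qed

lemma ex_list_of_length_iff: "(\<exists>b. length b = l \<and> P b) \<longleftrightarrow> (\<exists>d. P (map (\<lambda>w. d (N + w)) [0..<l]))"
proof
  assume "\<exists>b. length b = l \<and> P b"
  then obtain b where "length b = l" "P b"
    by blast
  moreover have "map (\<lambda>w. b ! (N + w - N)) [0..<l] = b" if "length b = l"
    using that map_nth[of b] by simp
  ultimately show "\<exists>d. P (map (\<lambda>w. d (N + w)) [0..<l])"
    by (intro exI[of _ "\<lambda>p. b ! (p - N)"]) simp
next
  assume "\<exists>d. P (map (\<lambda>w. d (N + w)) [0..<l])"
  then obtain d where "P (map (\<lambda>w. d (N + w)) [0..<l])"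
    by blast
  then show "\<exists>b. length b = l \<and> P b"
    by (intro exI[of _ "map (\<lambda>w. d (N + w)) [0..<l]"]) simp
qed

lemma shatters_lists_iff:
  "shatters R {b. length b = l} c n \<longleftrightarrow>
    (\<forall>S\<in>Pow {..<n}. \<exists>d. \<forall>i\<in>{..<n}. R (c i) (map (\<lambda>w. d (N + w)) [0..<l]) = (i \<in> S))"
proof -
  have "(\<exists>b\<in>{b. length b = l}. \<forall>i<n. R (c i) b = (i \<in> S)) \<longleftrightarrow>
      (\<exists>d. \<forall>i\<in>{..<n}. R (c i) (map (\<lambda>w. d (N + w)) [0..<l]) = (i \<in> S))" for S
    using ex_list_of_length_iff[where N = N and l = l and P = "\<lambda>b. \<forall>i<n. R (c i) b = (i \<in> S)"]
    by (simp add: Ball_def)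
  then show ?thesis
    unfolding shatters_def by (simp add: Ball_def)
qed

abbreviation shattered :: "('f, 'r, 'm) struc \<Rightarrow> nat \<Rightarrow> nat \<Rightarrow> ('f, 'r) fm \<Rightarrow> (nat \<Rightarrow> 'm list) \<Rightarrow> nat \<Rightarrow> bool"
  where "shattered M k l \<phi> \<equiv> shatters (holds M k \<phi>) {b. length b = l}"

lemma definable_holds_block:
  fixes M :: "('f, 'r, 'm) struc"
  assumes wf: "wf_fm fa ra \<phi>" and fv: "fv \<phi> \<subseteq> {..<k + l}" and "c \<in> A" "finite V"
    and N: "\<forall>v\<in>V. v < N" and G: "\<And>v. v < k \<Longrightarrow> k * i + v \<notin> V \<Longrightarrow> G (k * i + v) \<in> A"
  shows "definable fa ra M (V \<union> {N..<N + l}) A (\<lambda>d.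
    holds M k \<phi> (block k (\<lambda>p. if p \<in> V then d p else G p) i) (map (\<lambda>w. d (N + w)) [0..<l]))"
proof -
  define h where "h v = (if v < k then (if k * i + v \<in> V then Inl (k * i + v) else Inr (G (k * i + v)))
    else Inl (N + (v - k)))" for v
  have "\<forall>v<k + l. case h v of Inl p \<Rightarrow> p \<in> V \<union> {N..<N + l} | Inr c \<Rightarrow> c \<in> A"
    using G by (auto simp: h_def)
  moreover have "inj_on h {v. v < k + l \<and> isl (h v)}"
  proof (rule inj_onI)
    have h_var: "h u = Inl (if u < k then k * i + u else N + (u - k)) \<and> (u < k \<longrightarrow> k * i + u < N)"
      if "isl (h u)" for u
      using that N by (auto simp: h_def split: if_splits)
    fix v w assume "v \<in> {v. v < k + l \<and> isl (h v)}" "w \<in> {v. v < k + l \<and> isl (h v)}" "h v = h w"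
    then have "(if v < k then k * i + v else N + (v - k)) = (if w < k then k * i + w else N + (w - k))"
      "v < k \<longrightarrow> k * i + v < N" "w < k \<longrightarrow> k * i + w < N"
      using h_var[of v] h_var[of w] by auto
    then show "v = w"
      by (auto split: if_splits)
  qed
  ultimately have "definable fa ra M (V \<union> {N..<N + l}) A
      (\<lambda>d. holds M k \<phi> (map (case_sum d id \<circ> h) [0..<k]) (map (case_sum d id \<circ> h) [k..<k + l]))"
    using assms(4) by (intro definable_holds[OF wf fv \<open>c \<in> A\<close>]) auto
  moreover have "map (case_sum d id \<circ> h) [0..<k] = block k (\<lambda>p. if p \<in> V then d p else G p) i" for d
    by (auto simp: block_def h_def)
  moreover have "map (case_sum d id \<circ> h) [k..<k + l] = map (\<lambda>w. d (N + w)) [0..<l]" for d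
  proof -
    have "[k..<k + l] = map (\<lambda>w. w + k) [0..<l]"
      by (simp add: map_add_upt add.commute)
    then show ?thesis
      by (simp add: h_def)
  qed
  ultimately show ?thesis
    by simp
qed

lemma definable_shattered:
  fixes M :: "('f, 'r, 'm) struc"
  assumes wf: "wf_fm fa ra \<phi>" and fv: "fv \<phi> \<subseteq> {..<k + l}" and "c \<in> A" "finite V"
    and G: "\<And>p. p < k * n \<Longrightarrow> p \<notin> V \<Longrightarrow> G p \<in> A"
  shows "definable fa ra M V A (\<lambda>d. shattered M k l \<phi> (block k (\<lambda>p. if p \<in> V then d p else G p)) n)"
proof -
  obtain N where N: "\<forall>v\<in>V. v < N"
    using assms(4) finite_nat_bounded by (metis lessThan_iff subsetD)
  \<comment> \<open>the parameter tuple b is addressed by the variables in Y, above V\<close>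
  define Y where "Y = {N..<N + l}"
  define x where "x d = block k (\<lambda>p. if p \<in> V then d p else G p)" for d
  define y where "y d = map (\<lambda>w. d (N + w)) [0..<l]" for d :: "nat \<Rightarrow> 'm"
  have finite_VY: "finite (V \<union> Y)"
    using assms(4) by (simp add: Y_def)
  have not_Y: "p \<notin> Y" if "p \<in> V" for p
    using that N by (auto simp: Y_def)
  have "definable fa ra M (V \<union> Y) A (\<lambda>d. \<forall>i\<in>{..<n}. holds M k \<phi> (x d i) (y d) = (i \<in> S))"
    for S
  proof (rule definable_Ball[OF finite_VY \<open>c \<in> A\<close>])
    fix i assume "i \<in> {..<n}"
    then have "definable fa ra M (V \<union> Y) A (\<lambda>d. holds M k \<phi> (x d i) (y d))"
      unfolding x_def y_def Y_def
      by (intro definable_holds_block[OF wf fv \<open>c \<in> A\<close> assms(4) N] G) (auto intro: block_index_less)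
    then show "definable fa ra M (V \<union> Y) A (\<lambda>d. holds M k \<phi> (x d i) (y d) = (i \<in> S))"
      using definable_Not by (cases "i \<in> S") simp_all
  qed simp
  then have "definable fa ra M (V \<union> Y - Y) A (\<lambda>d. \<exists>d'. \<forall>i\<in>{..<n}.
      holds M k \<phi> (x (\<lambda>v. if v \<in> Y then d' v else d v) i) (y (\<lambda>v. if v \<in> Y then d' v else d v)) = (i \<in> S))"
    for S
    by (rule definable_Ex_set[rotated 2]) (auto simp: Y_def)
  moreover have "x (\<lambda>v. if v \<in> Y then d' v else d v) = x d" for d d'
    unfolding x_def using not_Y by (metis (no_types, lifting))
  moreover have "y (\<lambda>v. if v \<in> Y then d' v else d v) = y d'" for d d'
    by (simp add: y_def Y_def)
  moreover have "V \<union> Y - Y = V"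
    using not_Y by auto
  ultimately have "definable fa ra M V A (\<lambda>d. \<exists>d'. \<forall>i\<in>{..<n}. holds M k \<phi> (x d i) (y d') = (i \<in> S))"
    for S
    by simp
  then have "definable fa ra M V A (\<lambda>d. \<forall>S\<in>Pow {..<n}. \<exists>d'. \<forall>i\<in>{..<n}.
      holds M k \<phi> (x d i) (y d') = (i \<in> S))"
    by (intro definable_Ball[OF assms(4) \<open>c \<in> A\<close>]) auto
  moreover have "shattered M k l \<phi> (x d) n \<longleftrightarrow>
      (\<forall>S\<in>Pow {..<n}. \<exists>d'. \<forall>i\<in>{..<n}. holds M k \<phi> (x d i) (y d') = (i \<in> S))" for d
    unfolding y_def by (rule shatters_lists_iff)
  ultimately show ?thesis
    unfolding x_def by simp
qed

lemma pattern_realized_if_shattered_blocks: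
  fixes M :: "('f, 'r, 'm) struc"
  assumes mon: "monster fa ra M" and wf: "wf_fm fa ra \<phi>" and fv: "fv \<phi> \<subseteq> {..<k + l}"
    and sh: "\<forall>n. shattered M k l \<phi> (block k D) n"
  shows "\<exists>b. length b = l \<and> (\<forall>i. holds M k \<phi> (block k D i) b = (i \<in> S))"
proof -
  define P where "P i = (\<lambda>d. holds M k \<phi> (block k D i) (map d [0..<l]) = (i \<in> S))" for i
  have "definable fa ra M {..<l} (range D) (P i)" for i
  proof -
    have "definable fa ra M ({} \<union> {0..<0 + l}) (range D) (\<lambda>d.
        holds M k \<phi> (block k (\<lambda>p. if p \<in> {} then d p else D p) i) (map (\<lambda>w. d (0 + w)) [0..<l]))"
      by (rule definable_holds_block[OF wf fv]) auto
    then have "definable fa ra M {..<l} (range D) (\<lambda>d. holds M k \<phi> (block k D i) (map d [0..<l]))"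
      by (simp add: atLeast0LessThan)
    then show ?thesis
      unfolding P_def using definable_Not by (cases "i \<in> S") simp_all
  qed
  moreover have "finitely_satisfiable (range P)"
    unfolding finitely_satisfiable_def
  proof (intro allI impI)
    fix F assume F: "F \<subseteq> range P" "finite F"
    obtain I where I: "finite I" "F = P ` I"
      using F by (meson finite_subset_image)
    obtain n where n: "\<forall>i\<in>I. i < n"
      using finite_nat_bounded[OF I(1)] by auto
    have "S \<inter> {..<n} \<subseteq> {..<n}"
      by simp
    then obtain b where b: "length b = l" "\<forall>i<n. holds M k \<phi> (block k D i) b = (i \<in> S \<inter> {..<n})"
      using sh unfolding shatters_def by blast
    have "map (\<lambda>w. b ! w) [0..<l] = b"
      using b(1) map_nth[of b] by simp
    then have "\<forall>i\<in>I. P i (\<lambda>w. b ! w)"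
      using b(2) n unfolding P_def by auto
    then show "\<exists>d. \<forall>Q\<in>F. Q d"
      unfolding I(2) by (intro exI[of _ "\<lambda>w. b ! w"]) simp
  qed
  ultimately have "\<exists>d. \<forall>Q\<in>range P. Q d"
    by (intro realize_definable[OF mon countable_image rangeI finite_lessThan]) auto
  then obtain d where "\<forall>i. P i d"
    by auto
  then show ?thesis
    unfolding P_def by (intro exI[of _ "map d [0..<l]"]) simp
qed

lemma not_NIP_if_shattered_blocks:
  fixes M :: "('f, 'r, 'm) struc"
  assumes "monster fa ra M" "wf_fm fa ra \<phi>" "fv \<phi> \<subseteq> {..<k + l}"
    and "\<forall>n. shattered M k l \<phi> (block k D) n"
  shows "\<not> NIP M k l \<phi>"
proof -
  have "\<exists>a :: nat \<Rightarrow> 'm list. (\<forall>i. length (a i) = k) \<and>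
      (\<forall>S. \<exists>b. length b = l \<and> (\<forall>i. holds M k \<phi> (a i) b \<longleftrightarrow> i \<in> S))"
    using pattern_realized_if_shattered_blocks[OF assms] by (intro exI[of _ "block k D"]) simp
  then show ?thesis
    unfolding NIP_def by simp
qed

lemma definable_shattered_extension:
  fixes M :: "('f, 'r, 'm) struc"
  assumes wf: "wf_fm fa ra \<phi>" and fv: "fv \<phi> \<subseteq> {..<k + l}" and "c \<in> A"
    and G: "\<And>p. p < k * t \<Longrightarrow> G p \<in> A"
  shows "definable fa ra M {k * t..<k * t + k} A (\<lambda>d. \<exists>D'. shattered M k l \<phi>
    (block k (\<lambda>p. if p < k * Suc t then (if p < k * t then G p else d p) else D' p)) n)"
proof -
  define N where "N = n + Suc t"
  define V where "V = {k * t..<k * N}"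
  define W where "W = {k * t + k..<k * N}"
  have kN: "k * t + k \<le> k * N" "k * n \<le> k * N"
    by (simp_all add: N_def add_mult_distrib2)
  then have below_N: "p < k * N" if "p < k * n" for p
    using that by linarith
  have VW: "W \<subseteq> V" "V - W = {k * t..<k * t + k}"
    using kN(1) by (auto simp: V_def W_def)
  have "definable fa ra M V A (\<lambda>d. shattered M k l \<phi> (block k (\<lambda>p. if p \<in> V then d p else G p)) n)"
    by (rule definable_shattered[OF wf fv \<open>c \<in> A\<close>]) (use G below_N in \<open>auto simp: V_def\<close>)
  then have "definable fa ra M (V - W) A (\<lambda>d. \<exists>D'. shattered M k l \<phi>
    (block k (\<lambda>p. if p \<in> V then (if p \<in> W then D' p else d p) else G p)) n)"
    by (intro definable_Ex_set[OF _ VW(1)]) (simp add: W_def)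
  moreover have "shattered M k l \<phi> (block k (\<lambda>p. if p \<in> V then (if p \<in> W then D' p else d p) else G p)) n =
      shattered M k l \<phi> (block k (\<lambda>p. if p < k * Suc t then (if p < k * t then G p else d p) else D' p)) n"
    for d D'
    by (rule shatters_block_cong) (use below_N in \<open>auto simp: V_def W_def\<close>)
  ultimately show ?thesis
    unfolding VW(2) by simp
qed

lemma extend_shattered_blocks:
  fixes M :: "('f, 'r, 'm) struc"
  assumes mon: "monster fa ra M" and wf: "wf_fm fa ra \<phi>" and fv: "fv \<phi> \<subseteq> {..<k + l}"
    and ext: "\<forall>n. \<exists>D'. shattered M k l \<phi> (block k (\<lambda>p. if p < k * t then G p else D' p)) n"
  shows "\<exists>d. \<forall>n. \<exists>D'. shattered M k l \<phi>
    (block k (\<lambda>p. if p < k * Suc t then (if p < k * t then G p else d p) else D' p)) n"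
proof -
  define A where "A = insert undefined (G ` {..<k * t})"
  define Q where "Q n d \<longleftrightarrow> (\<exists>D'. shattered M k l \<phi>
    (block k (\<lambda>p. if p < k * Suc t then (if p < k * t then G p else d p) else D' p)) n)" for n d
  have "definable fa ra M {k * t..<k * t + k} A (Q n)" for n
    unfolding Q_def A_def by (rule definable_shattered_extension[OF wf fv insertI1]) auto
  then have "\<forall>P\<in>range Q. definable fa ra M {k * t..<k * t + k} A P"
    by blast
  moreover have "finitely_satisfiable (range Q)"
    unfolding finitely_satisfiable_def
  proof (intro allI impI)
    fix F assume F: "F \<subseteq> range Q" "finite F"
    obtain I where I: "finite I" "F = Q ` I"
      using F by (meson finite_subset_image)
    obtain D' where D': "shattered M k l \<phi> (block k (\<lambda>p. if p < k * t then G p else D' p)) (Max (insert 0 I))"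
      using ext by blast
    have "(\<lambda>p. if p < k * Suc t then (if p < k * t then G p else D' p) else D' p) =
        (\<lambda>p. if p < k * t then G p else D' p)"
      by auto
    moreover have "shattered M k l \<phi> (block k (\<lambda>p. if p < k * t then G p else D' p)) n" if "n \<in> I" for n
      by (rule shatters_mono[OF D']) (intro Max_ge, use that I(1) in auto)
    ultimately have "Q n D'" if "n \<in> I" for n
      unfolding Q_def using that by (intro exI[of _ D']) (simp only:)
    then have "\<forall>P\<in>F. P D'"
      using I(2) by blast
    then show "\<exists>d. \<forall>P\<in>F. P d"
      by (rule exI[where x = D'])
  qed
  ultimately have "\<exists>d. \<forall>P\<in>range Q. P d"
    by (intro realize_definable[OF mon _ insertI1]) (auto simp: A_def)
  then obtain d where "\<forall>n. Q n d"
    by auto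
  then show ?thesis
    unfolding Q_def by (rule exI[where x = d])
qed

lemma limit_of_agreeing_approximations:
  fixes Gs :: "nat \<Rightarrow> nat \<Rightarrow> 'a" and k :: nat
  assumes agree: "\<And>t p. p < k * t \<Longrightarrow> Gs (Suc t) p = Gs t p"
  shows "\<exists>D. \<forall>n p. p < k * n \<longrightarrow> D p = Gs n p"
proof -
  have stable: "Gs t' p = Gs t p" if "t \<le> t'" "p < k * t" for t t' p
    using that(1)
  proof (induction t' rule: dec_induct)
    case (step t')
    have "p < k * t'"
      using that(2) mult_le_mono2[OF step.hyps(1), of k] by linarith
    then show ?case
      using agree[of p t'] step.IH by simp
  qed simp
  have "Gs (Suc p) p = Gs n p" if "p < k * n" for p n
  proof (cases "Suc p \<le> n")
    case True
    have "p < k * Suc p"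
      using that by (cases k) auto
    then show ?thesis
      using stable[OF True] by simp
  next
    case False
    then show ?thesis
      using stable[of n "Suc p" p] that by simp
  qed
  then show ?thesis
    by (intro exI[of _ "\<lambda>p. Gs (Suc p) p"]) blast
qed

lemma shattered_blocks_if_shattered_sets:
  fixes M :: "('f, 'r, 'm) struc"
  assumes mon: "monster fa ra M" and wf: "wf_fm fa ra \<phi>" and fv: "fv \<phi> \<subseteq> {..<k + l}"
    and big: "\<And>n. \<exists>c. (\<forall>i. length (c i) = k) \<and> shattered M k l \<phi> c n"
  shows "\<exists>D. \<forall>n. shattered M k l \<phi> (block k D) n"
proof -
  define ext where "ext t G \<longleftrightarrow>
    (\<forall>n. \<exists>D'. shattered M k l \<phi> (block k (\<lambda>p. if p < k * t then G p else D' p)) n)" for t G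
  have "\<exists>Gs. \<forall>t. ext t (Gs t) \<and> (\<forall>p<k * t. Gs (Suc t) p = Gs t p)"
  proof (rule dependent_nat_choice)
    have "ext 0 G" for G
      unfolding ext_def
    proof
      fix n
      obtain c where "\<forall>i. length (c i) = k" "shattered M k l \<phi> c n"
        using big by blast
      moreover obtain D where "block k D = c"
        using block_exists[OF calculation(1)] by blast
      ultimately show "\<exists>D'. shattered M k l \<phi> (block k (\<lambda>p. if p < k * 0 then G p else D' p)) n"
        by (intro exI[of _ D]) simp
    qed
    then show "\<exists>G. ext 0 G"
      by blast
  next
    fix G t assume "ext t G"
    then obtain d where "\<forall>n. \<exists>D'. shattered M k l \<phi>
        (block k (\<lambda>p. if p < k * Suc t then (if p < k * t then G p else d p) else D' p)) n"
      using extend_shattered_blocks[OF mon wf fv] unfolding ext_def by blast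
    then show "\<exists>G'. ext (Suc t) G' \<and> (\<forall>p<k * t. G' p = G p)"
      unfolding ext_def by (intro exI[of _ "\<lambda>p. if p < k * t then G p else d p"]) simp
  qed
  then obtain Gs where Gs: "\<And>t. ext t (Gs t)" "\<And>t p. p < k * t \<Longrightarrow> Gs (Suc t) p = Gs t p"
    by blast
  obtain D where D: "\<And>n p. p < k * n \<Longrightarrow> D p = Gs n p"
    using limit_of_agreeing_approximations[where Gs = Gs and k = k, OF Gs(2)] by blast
  have "shattered M k l \<phi> (block k D) n" for n
  proof -
    obtain D' where "shattered M k l \<phi> (block k (\<lambda>p. if p < k * n then Gs n p else D' p)) n"
      using Gs(1)[of n] unfolding ext_def by blast
    moreover have "shattered M k l \<phi> (block k D) n =
        shattered M k l \<phi> (block k (\<lambda>p. if p < k * n then Gs n p else D' p)) n"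
      by (rule shatters_block_cong) (simp add: D)
    ultimately show ?thesis
      by simp
  qed
  then show ?thesis
    by (rule exI[where x = D, OF allI])
qed

section \<open>Sign changes and Ramsey's theorem\<close>

definition sign_changes :: "(nat \<Rightarrow> bool) \<Rightarrow> nat set" where
  "sign_changes g = {p. g p \<noteq> g (Suc p)}"

lemma many_sign_changes:
  assumes "\<not> (finite (sign_changes g) \<and> card (sign_changes g) \<le> m)"
  obtains F where "F \<subseteq> sign_changes g" "finite F" "card F = Suc m"
proof (cases "finite (sign_changes g)")
  case True
  then have "Suc m \<le> card (sign_changes g)"
    using assms by simp
  then obtain F where "F \<subseteq> sign_changes g" "card F = Suc m" "finite F"
    by (rule obtain_subset_with_card_n)
  then show ?thesis
    using that by blast
next
  case False
  then obtain F where "finite F" "card F = Suc m" "F \<subseteq> sign_changes g"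
    using infinite_arbitrarily_large by blast
  then show ?thesis
    using that by blast
qed

lemma bounded_sign_changes_if_finite_subsets:
  assumes "\<And>F. F \<subseteq> sign_changes g \<Longrightarrow> finite F \<Longrightarrow> card F \<le> m"
  shows "finite (sign_changes g) \<and> card (sign_changes g) \<le> m"
proof (rule ccontr)
  assume "\<not> (finite (sign_changes g) \<and> card (sign_changes g) \<le> m)"
  then obtain F where "F \<subseteq> sign_changes g" "finite F" "card F = Suc m"
    by (rule many_sign_changes)
  then show False
    using assms[of F] by simp
qed

lemma sorted_list_of_set_image_strict_mono_on:
  assumes "strict_mono_on {..<n} h"
  shows "sorted_list_of_set (h ` {..<n}) = map (h :: nat \<Rightarrow> nat) [0..<n]"
proof (rule sorted_distinct_set_unique)
  show "sorted (map h [0..<n])"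
    unfolding sorted_iff_nth_mono using assms by (auto intro: strict_mono_on_leD)
  show "distinct (map h [0..<n])"
    using strict_mono_on_imp_inj_on[OF assms] by (simp add: distinct_map lessThan_atLeast0)
qed auto

lemma pattern_from_sign_changes:
  assumes "F \<subseteq> sign_changes g" "finite F" "2 * n \<le> card F"
  shows "\<exists>w. strict_mono_on {..<n} w \<and> (\<forall>i<n. g (w i) = (i \<in> S))"
proof -
  define p where "p = sorted_list_of_set F"
  have p: "sorted_wrt (<) p" "length p = card F" "set p = F"
    using assms(2) by (simp_all add: p_def)
  \<comment> \<open>the changes of sign at p!(2i) provide both truth values in p!(2i) and Suc (p!(2i)),
    and Suc (p!(2i)) \<le> p!(2i+1) < p!(2j) for i < j\<close>
  define w where "w i = (if g (p ! (2 * i)) = (i \<in> S) then p ! (2 * i) else Suc (p ! (2 * i)))" for i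
  have change: "g (p ! (2 * i)) \<noteq> g (Suc (p ! (2 * i)))" if "i < n" for i
    using that assms p nth_mem[of "2 * i" p] by (auto simp: sign_changes_def)
  have "g (w i) = (i \<in> S)" if "i < n" for i
    using change[OF that] by (auto simp: w_def)
  moreover have "strict_mono_on {..<n} w"
  proof (rule strict_mono_onI)
    fix i j assume "i \<in> {..<n}" "j \<in> {..<n}" "i < j"
    then have "2 * i + 1 < length p" "2 * j < length p" "2 * i + 1 < 2 * j"
      using assms(3) p(2) by auto
    then have "p ! (2 * i) < p ! (2 * i + 1)" "p ! (2 * i + 1) < p ! (2 * j)"
      by (auto intro: sorted_wrt_nth_less[OF p(1)])
    then show "w i < w j"
      unfolding w_def by auto
  qed
  ultimately show ?thesis
    by blast
qed

lemma Ramsey_homogeneous_family: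
  fixes C :: "'c \<Rightarrow> 'a set \<Rightarrow> bool"
  assumes "finite SS" "infinite Z"
  shows "\<exists>Y\<subseteq>Z. infinite Y \<and> (\<forall>S\<in>SS. (\<forall>X. X \<subseteq> Y \<and> finite X \<and> card X = n \<longrightarrow> C S X) \<or>
      (\<forall>X. X \<subseteq> Y \<and> finite X \<and> card X = n \<longrightarrow> \<not> C S X))"
  using assms(1)
proof (induction SS rule: finite_induct)
  case empty
  then show ?case
    using assms(2) by blast
next
  case (insert S SS)
  then obtain Y1 where Y1: "Y1 \<subseteq> Z" "infinite Y1"
    "\<forall>S\<in>SS. (\<forall>X. X \<subseteq> Y1 \<and> finite X \<and> card X = n \<longrightarrow> C S X) \<or>
      (\<forall>X. X \<subseteq> Y1 \<and> finite X \<and> card X = n \<longrightarrow> \<not> C S X)"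
    by blast
  have two_colours: "\<forall>X. X \<subseteq> Y1 \<and> finite X \<and> card X = n \<longrightarrow> of_bool (C S X) < (2 :: nat)"
    by simp
  obtain Y and t :: nat where Y: "Y \<subseteq> Y1" "infinite Y" "t < 2"
    "\<forall>X. X \<subseteq> Y \<and> finite X \<and> card X = n \<longrightarrow> of_bool (C S X) = t"
    using Ramsey[OF Y1(2) two_colours] by blast
  have "(\<forall>X. X \<subseteq> Y \<and> finite X \<and> card X = n \<longrightarrow> C S X) \<or>
      (\<forall>X. X \<subseteq> Y \<and> finite X \<and> card X = n \<longrightarrow> \<not> C S X)"
    using Y(3,4) by (cases "t = 0") auto
  moreover have "\<forall>S\<in>SS. (\<forall>X. X \<subseteq> Y \<and> finite X \<and> card X = n \<longrightarrow> C S X) \<or>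
      (\<forall>X. X \<subseteq> Y \<and> finite X \<and> card X = n \<longrightarrow> \<not> C S X)"
    using Y1(3) Y(1) by (meson subset_trans)
  ultimately show ?case
    using Y(1,2) Y1(1) by (intro exI[of _ Y]) auto
qed

text \<open>By Ramsey's theorem, each pattern S is realized either by all n-subsets of an infinite
  set Y of indices or by none; the sign changes along Y show that some n-subset realizes S.\<close>

lemma shattered_subsequence_if_many_sign_changes:
  fixes R :: "'a \<Rightarrow> 'b \<Rightarrow> bool" and c :: "nat \<Rightarrow> 'a"
  assumes many: "\<And>j. strict_mono j \<Longrightarrow>
    \<exists>b\<in>B. \<exists>F. F \<subseteq> sign_changes (\<lambda>i. R (c (j i)) b) \<and> finite F \<and> 2 * n \<le> card F"
  shows "\<exists>j. strict_mono j \<and> shatters R B (c \<circ> j) n"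
proof -
  define realizes where "realizes S X \<longleftrightarrow>
    (\<exists>b\<in>B. \<forall>i<n. R (c (sorted_list_of_set X ! i)) b = (i \<in> S))" for S X
  obtain Y where Y: "infinite Y" "\<forall>S\<in>Pow {..<n}.
      (\<forall>X. X \<subseteq> Y \<and> finite X \<and> card X = n \<longrightarrow> realizes S X) \<or>
      (\<forall>X. X \<subseteq> Y \<and> finite X \<and> card X = n \<longrightarrow> \<not> realizes S X)"
    using Ramsey_homogeneous_family[of "Pow {..<n}" UNIV n realizes] by auto
  define j where "j = enumerate Y"
  have j: "strict_mono j" "\<And>i. j i \<in> Y"
    unfolding j_def using Y(1) by (simp_all add: strict_mono_enumerate enumerate_in_set)
  have X_n: "h ` {..<n} \<subseteq> Y \<and> finite (h ` {..<n}) \<and> card (h ` {..<n}) = n"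
    if "strict_mono_on {..<n} h" "\<And>i. i < n \<Longrightarrow> h i \<in> Y" for h
    using that card_image[OF strict_mono_on_imp_inj_on[OF that(1)]] by auto
  obtain b F where bF: "b \<in> B" "F \<subseteq> sign_changes (\<lambda>i. R (c (j i)) b)" "finite F" "2 * n \<le> card F"
    using many[OF j(1)] by blast
  have "realizes S (j ` {..<n})" if "S \<subseteq> {..<n}" for S
  proof -
    obtain w where w: "strict_mono_on {..<n} w" "\<forall>i<n. R (c (j (w i))) b = (i \<in> S)"
      using pattern_from_sign_changes[OF bF(2-4)] by blast
    have jw: "strict_mono_on {..<n} (j \<circ> w)"
      using w(1) j(1) by (auto simp: strict_mono_on_def strict_mono_def)
    then have "realizes S ((j \<circ> w) ` {..<n})"
      unfolding realizes_def sorted_list_of_set_image_strict_mono_on[OF jw] using bF(1) w(2) by auto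
    moreover have "strict_mono_on {..<n} j"
      using j(1) by (simp add: strict_mono_on_def strict_mono_def)
    ultimately show ?thesis
      using Y(2) that X_n[OF jw] X_n[of j] j(2) by (metis PowI comp_apply)
  qed
  then have "shatters R B (c \<circ> j) n"
    using sorted_list_of_set_image_strict_mono_on[of n j] j(1)
    by (auto simp: shatters_def realizes_def strict_mono_on_def strict_mono_def)
  then show ?thesis
    using j(1) by blast
qed

lemma eventually_constant_if_finite_sign_changes:
  assumes "finite (sign_changes g)"
  shows "\<exists>n. \<forall>i\<ge>n. g i = g n"
proof -
  obtain n where n: "\<forall>p\<in>sign_changes g. p < n"
    using finite_nat_bounded[OF assms] by auto
  have "g i = g n" if "n \<le> i" for i
    using that
  proof (induction i rule: dec_induct)
    case (step i)
    then show ?case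
      using n by (force simp: sign_changes_def)
  qed simp
  then show ?thesis
    by blast
qed

lemma variation_sums_card_sign_changes:
  assumes "finite (sign_changes g)"
  shows "(\<lambda>i. \<bar>(of_bool (g i) :: real) - of_bool (g (Suc i))\<bar>) sums real (card (sign_changes g))"
proof -
  have "(\<lambda>i. \<bar>(of_bool (g i) :: real) - of_bool (g (Suc i))\<bar>) =
      (\<lambda>i. if i \<in> sign_changes g then 1 else 0)"
    by (auto simp: sign_changes_def fun_eq_iff)
  then show ?thesis
    using sums_If_finite_set[OF assms, of "\<lambda>_. 1 :: real"] by simp
qed

lemma tail_variation_bounded:
  assumes "finite (sign_changes g)" "card (sign_changes g) \<le> m"
  defines "t \<equiv> \<lambda>i. \<bar>(of_bool (g i) :: real) - of_bool (g (Suc i))\<bar>"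
  shows "summable (\<lambda>i. t (Suc i)) \<and> (\<Sum>i. t (Suc i)) \<le> real m"
proof -
  have "t sums real (card (sign_changes g))"
    unfolding t_def by (rule variation_sums_card_sign_changes[OF assms(1)])
  then have "summable t" "(\<Sum>i. t (Suc i)) = real (card (sign_changes g)) - t 0"
    by (simp_all add: sums_iff suminf_split_head)
  moreover have "t 0 \<ge> 0"
    by (simp add: t_def)
  ultimately show ?thesis
    using assms(2) summable_iff_shift[of t 1] by simp
qed

lemma alternating_not_convergent: "\<not> (\<lambda>i. of_bool (even i) :: real) \<longlonglongrightarrow> L"
proof
  assume "(\<lambda>i. of_bool (even i) :: real) \<longlonglongrightarrow> L"
  then have "(\<lambda>i. \<bar>(of_bool (even i) :: real) - of_bool (even (Suc i))\<bar>) \<longlonglongrightarrow> \<bar>L - L\<bar>"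
    by (intro tendsto_rabs tendsto_diff LIMSEQ_Suc)
  moreover have "(\<lambda>i. \<bar>(of_bool (even i) :: real) - of_bool (even (Suc i))\<bar>) = (\<lambda>i. 1)"
    by auto
  ultimately have "(\<lambda>i. 1 :: real) \<longlonglongrightarrow> 0"
    by simp
  then show False
    using LIMSEQ_unique[OF tendsto_const] by force
qed

definition rises :: "(nat \<Rightarrow> bool) \<Rightarrow> nat set" where
  "rises h = {p. \<not> h p \<and> h (Suc p)}"

definition falls :: "(nat \<Rightarrow> bool) \<Rightarrow> nat set" where
  "falls h = {p. h p \<and> \<not> h (Suc p)}"

lemma of_bool_eq_rises_minus_falls:
  assumes "\<not> h 0"
  shows "(of_bool (h n) :: real) = real (card (rises h \<inter> {..<n})) - real (card (falls h \<inter> {..<n}))"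
proof (induction n)
  case 0
  then show ?case
    using assms by simp
next
  case (Suc n)
  have "rises h \<inter> {..<Suc n} = (if n \<in> rises h then insert n (rises h \<inter> {..<n}) else rises h \<inter> {..<n})"
    "falls h \<inter> {..<Suc n} = (if n \<in> falls h then insert n (falls h \<inter> {..<n}) else falls h \<inter> {..<n})"
    by (auto simp: lessThan_Suc)
  then show ?case
    using Suc.IH by (cases "h n"; cases "h (Suc n)") (simp_all add: rises_def falls_def)
qed

lemma lsc_on_card:
  assumes "\<And>p. openin X {q \<in> topspace X. P p q}" and "\<And>q. q \<in> topspace X \<Longrightarrow> finite {p. P p q}"
  shows "lsc_on X (\<lambda>q. real (card {p. P p q}))"
  unfolding lsc_on_def
proof
  fix c :: real
  have "{q \<in> topspace X. real (card {p. P p q}) > c} =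
      (\<Union>T\<in>{T. finite T \<and> real (card T) > c}. (\<Inter>p\<in>T. {q \<in> topspace X. P p q}) \<inter> topspace X)"
  proof (intro equalityI subsetI)
    fix q assume "q \<in> {q \<in> topspace X. real (card {p. P p q}) > c}"
    then show "q \<in> (\<Union>T\<in>{T. finite T \<and> real (card T) > c}. (\<Inter>p\<in>T. {q \<in> topspace X. P p q}) \<inter> topspace X)"
      using assms(2) by blast
  next
    fix q assume "q \<in> (\<Union>T\<in>{T. finite T \<and> real (card T) > c}. (\<Inter>p\<in>T. {q \<in> topspace X. P p q}) \<inter> topspace X)"
    then obtain T where "finite T" "real (card T) > c" "q \<in> topspace X" "\<forall>p\<in>T. P p q"
      by blast
    moreover have "card T \<le> card {p. P p q}"
      using calculation assms(2) by (intro card_mono) auto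
    ultimately show "q \<in> {q \<in> topspace X. real (card {p. P p q}) > c}"
      by simp
  qed
  moreover have "openin X (\<Union>T\<in>{T. finite T \<and> real (card T) > c}. (\<Inter>p\<in>T. {q \<in> topspace X. P p q}) \<inter> topspace X)"
    using assms(1) by (intro openin_Union) auto
  ultimately show "openin X {q \<in> topspace X. real (card {p. P p q}) > c}"
    by simp
qed

lemma openin_rises_falls:
  assumes "\<And>i. continuous_map X (discrete_topology UNIV) (\<lambda>q. h q i)"
  shows "openin X {q \<in> topspace X. p \<in> rises (h q)}" "openin X {q \<in> topspace X. p \<in> falls (h q)}"
proof -
  have "openin X {q \<in> topspace X. h q i}" "openin X {q \<in> topspace X. \<not> h q i}" for i
    using openin_continuous_map_preimage[OF assms[of i], of "{True}"]
      openin_continuous_map_preimage[OF assms[of i], of "{False}"] by simp_all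
  moreover have "{q \<in> topspace X. p \<in> rises (h q)} =
      {q \<in> topspace X. \<not> h q p} \<inter> {q \<in> topspace X. h q (Suc p)}"
    "{q \<in> topspace X. p \<in> falls (h q)} =
      {q \<in> topspace X. h q p} \<inter> {q \<in> topspace X. \<not> h q (Suc p)}"
    by (auto simp: rises_def falls_def)
  ultimately show "openin X {q \<in> topspace X. p \<in> rises (h q)}" "openin X {q \<in> topspace X. p \<in> falls (h q)}"
    by (simp_all add: openin_Int)
qed

lemma rises_falls_subset_sign_changes: "rises h \<subseteq> sign_changes h" "falls h \<subseteq> sign_changes h"
  by (auto simp: rises_def falls_def sign_changes_def)

lemma sign_changes_case_nat:
  assumes "finite (sign_changes g)" "card (sign_changes g) \<le> m"
  shows "finite (sign_changes (case_nat b g)) \<and> card (sign_changes (case_nat b g)) \<le> Suc m"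
proof -
  have sub: "sign_changes (case_nat b g) \<subseteq> insert 0 (Suc ` sign_changes g)"
  proof
    fix x assume x: "x \<in> sign_changes (case_nat b g)"
    show "x \<in> insert 0 (Suc ` sign_changes g)"
    proof (cases x)
      case (Suc y)
      then have "y \<in> sign_changes g"
        using x by (simp add: sign_changes_def)
      then show ?thesis
        using Suc by blast
    qed simp
  qed
  have "card (insert 0 (Suc ` sign_changes g)) \<le> Suc (card (Suc ` sign_changes g))"
    using assms(1) by (simp add: card_insert_if)
  also have "\<dots> \<le> Suc m"
    using assms(2) by (simp add: card_image)
  finally show ?thesis
    using sub assms(1) card_mono[OF _ sub] finite_subset[OF sub] by simp
qed

lemma limit_eq_rises_minus_falls:
  assumes "finite (sign_changes h)" "\<not> h 0"
  shows "(\<lambda>i. of_bool (h (Suc i)) :: real) \<longlonglongrightarrow> real (card (rises h)) - real (card (falls h))"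
proof -
  obtain B where B: "\<forall>p\<in>sign_changes h. p < B"
    using finite_nat_bounded[OF assms(1)] by auto
  have "rises h \<inter> {..<Suc i} = rises h" "falls h \<inter> {..<Suc i} = falls h" if "B \<le> i" for i
    using B that rises_falls_subset_sign_changes[of h] by force+
  then have "\<forall>i\<ge>B. (of_bool (h (Suc i)) :: real) = real (card (rises h)) - real (card (falls h))"
    using of_bool_eq_rises_minus_falls[of h, OF assms(2)] by simp
  then have "eventually (\<lambda>i. (of_bool (h (Suc i)) :: real) = real (card (rises h)) - real (card (falls h)))
      sequentially"
    unfolding eventually_sequentially by blast
  then show ?thesis
    by (rule tendsto_eventually)
qed

text \<open>Started with False, the sequence tends to its number of rises minus its number of falls;
  both counts are lower semicontinuous because each rise or fall is witnessed by two coordinates.\<close>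

lemma DBSC_limit_if_bounded_sign_changes:
  fixes g :: "'x \<Rightarrow> nat \<Rightarrow> bool"
  assumes cont: "\<And>i. continuous_map X (discrete_topology UNIV) (\<lambda>q. g q i)"
    and bounded: "\<And>q. q \<in> topspace X \<Longrightarrow> finite (sign_changes (g q)) \<and> card (sign_changes (g q)) \<le> m"
  shows "\<exists>f. (\<forall>q\<in>topspace X. (\<lambda>i. of_bool (g q i) :: real) \<longlonglongrightarrow> f q) \<and> DBSC X f"
proof -
  define h where "h q = case_nat False (g q)" for q
  have h_cont: "continuous_map X (discrete_topology UNIV) (\<lambda>q. h q i)" for i
    using cont by (cases i) (simp_all add: h_def)
  have changes: "finite (sign_changes (h q)) \<and> card (sign_changes (h q)) \<le> Suc m"
    if "q \<in> topspace X" for q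
    using bounded[OF that] sign_changes_case_nat unfolding h_def by blast
  have fin: "finite (rises (h q)) \<and> card (rises (h q)) \<le> Suc m \<and>
      finite (falls (h q)) \<and> card (falls (h q)) \<le> Suc m" if "q \<in> topspace X" for q
  proof -
    have "finite (sign_changes (h q))"
      using changes[OF that] by blast
    then have "card (rises (h q)) \<le> card (sign_changes (h q))" "card (falls (h q)) \<le> card (sign_changes (h q))"
      "finite (rises (h q))" "finite (falls (h q))"
      using rises_falls_subset_sign_changes[of "h q"] by (simp_all add: card_mono finite_subset)
    then show ?thesis
      using changes[OF that] by linarith
  qed
  define F1 where "F1 q = real (card (rises (h q)))" for q
  define F2 where "F2 q = real (card (falls (h q)))" for q
  have "(\<lambda>i. of_bool (g q i) :: real) \<longlonglongrightarrow> F1 q - F2 q" if "q \<in> topspace X" for q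
    using limit_eq_rises_minus_falls[of "h q"] changes[OF that] by (simp add: F1_def F2_def h_def)
  moreover have "lsc_on X F1" "lsc_on X F2"
    unfolding F1_def F2_def
    using lsc_on_card[of X "\<lambda>p q. p \<in> rises (h q)"] lsc_on_card[of X "\<lambda>p q. p \<in> falls (h q)"]
      openin_rises_falls[OF h_cont] fin by simp_all
  moreover have "\<bar>F1 q\<bar> \<le> real (Suc m)" "\<bar>F2 q\<bar> \<le> real (Suc m)" if "q \<in> topspace X" for q
    using fin[OF that] unfolding F1_def F2_def by (simp_all only: abs_of_nat of_nat_le_iff)
  then have "bounded_fun_on X F1" "bounded_fun_on X F2"
    unfolding bounded_fun_on_def by blast+
  ultimately show ?thesis
    unfolding DBSC_def bsc_on_def by (intro exI[of _ "\<lambda>q. F1 q - F2 q"]) blast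
qed

lemma NIP_imp_bounded_sign_changes:
  fixes M :: "('f, 'r, 'm) struc" and a :: "nat \<Rightarrow> 'm list"
  assumes mon: "monster fa ra M" and wf: "wf_fm fa ra \<phi>" and fv: "fv \<phi> \<subseteq> {..<k + l}"
    and nip: "NIP M k l \<phi>" and lengths: "\<forall>i. length (a i) = k"
  shows "\<exists>j m. strict_mono j \<and> (\<forall>b. length b = l \<longrightarrow>
    finite (sign_changes (\<lambda>i. holds M k \<phi> (a (j i)) b)) \<and>
    card (sign_changes (\<lambda>i. holds M k \<phi> (a (j i)) b)) \<le> m)"
proof (rule ccontr)
  \<comment> \<open>otherwise Ramsey's theorem gives shattered sets of every size, and compactness an
    infinite shattered sequence\<close>
  assume "\<not> ?thesis"
  then have many: "\<exists>b. length b = l \<and> \<not> (finite (sign_changes (\<lambda>i. holds M k \<phi> (a (j i)) b)) \<and>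
      card (sign_changes (\<lambda>i. holds M k \<phi> (a (j i)) b)) \<le> m)" if "strict_mono j" for j m
    using that by blast
  have "\<exists>c. (\<forall>i. length (c i) = k) \<and> shattered M k l \<phi> c n" for n
  proof -
    have "\<exists>b\<in>{b. length b = l}. \<exists>F. F \<subseteq> sign_changes (\<lambda>i. holds M k \<phi> (a (j i)) b) \<and>
        finite F \<and> 2 * n \<le> card F" if j: "strict_mono j" for j
    proof -
      obtain b where "length b = l" "\<not> (finite (sign_changes (\<lambda>i. holds M k \<phi> (a (j i)) b)) \<and>
          card (sign_changes (\<lambda>i. holds M k \<phi> (a (j i)) b)) \<le> 2 * n)"
        using many[OF j] by blast
      moreover obtain F where "F \<subseteq> sign_changes (\<lambda>i. holds M k \<phi> (a (j i)) b)" "finite F"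
        "card F = Suc (2 * n)"
        using many_sign_changes[OF calculation(2)] by blast
      ultimately show ?thesis
        by (intro bexI[of _ b] exI[of _ F]) auto
    qed
    then obtain j where "shattered M k l \<phi> (a \<circ> j) n"
      using shattered_subsequence_if_many_sign_changes by blast
    then show ?thesis
      using lengths by (intro exI[of _ "a \<circ> j"]) simp
  qed
  then obtain D where "\<forall>n. shattered M k l \<phi> (block k D) n"
    using shattered_blocks_if_shattered_sets[OF mon wf fv] by blast
  then show False
    using not_NIP_if_shattered_blocks[OF mon wf fv] nip by blast
qed

lemma not_NIP_imp_alternating:
  fixes M :: "('f, 'r, 'm) struc"
  assumes "\<not> NIP M k l \<phi>"
  shows "\<exists>a :: nat \<Rightarrow> 'm list. (\<forall>i. length (a i) = k) \<and> (\<forall>j :: nat \<Rightarrow> nat. strict_mono j \<longrightarrow>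
    (\<exists>b. length b = l \<and> (\<forall>i. holds M k \<phi> (a (j i)) b = even i)))"
proof -
  obtain a :: "nat \<Rightarrow> 'm list" where a: "\<forall>i. length (a i) = k"
    "\<forall>S. \<exists>b. length b = l \<and> (\<forall>i. holds M k \<phi> (a i) b \<longleftrightarrow> i \<in> S)"
    using assms unfolding NIP_def by blast
  have "\<exists>b. length b = l \<and> (\<forall>i. holds M k \<phi> (a (j i)) b = even i)"
    if "strict_mono j" for j :: "nat \<Rightarrow> nat"
  proof -
    obtain b where "length b = l" "\<forall>i. holds M k \<phi> (a i) b \<longleftrightarrow> i \<in> j ` {i. even i}"
      using a(2) by blast
    moreover have "j i \<in> j ` {i. even i} \<longleftrightarrow> even i" for i
      using strict_mono_imp_inj_on[OF that] by (simp add: inj_image_mem_iff)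
    ultimately show ?thesis
      by auto
  qed
  then show ?thesis
    using a(1) by blast
qed

text \<open>Conditions (ii) and (iii) are instances: a property of Boolean sequences that holds when
  there are at most m changes of sign, and fails for the alternating sequence.\<close>

lemma NIP_iff_subsequence_property:
  fixes M :: "('f, 'r, 'm) struc" and P :: "nat \<Rightarrow> (nat \<Rightarrow> bool) \<Rightarrow> bool"
  assumes mon: "monster fa ra M" and wf: "wf_fm fa ra \<phi>" and fv: "fv \<phi> \<subseteq> {..<k + l}"
    and bounded_P: "\<And>g m. finite (sign_changes g) \<Longrightarrow> card (sign_changes g) \<le> m \<Longrightarrow> P m g"
    and not_P_even: "\<And>m. \<not> P m even"
  shows "NIP M k l \<phi> \<longleftrightarrow> (\<forall>a :: nat \<Rightarrow> 'm list. (\<forall>i. length (a i) = k) \<longrightarrow>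
    (\<exists>j m. strict_mono j \<and> (\<forall>b. length b = l \<longrightarrow> P m (\<lambda>i. holds M k \<phi> (a (j i)) b))))"
proof
  assume "NIP M k l \<phi>"
  then show "\<forall>a :: nat \<Rightarrow> 'm list. (\<forall>i. length (a i) = k) \<longrightarrow>
      (\<exists>j m. strict_mono j \<and> (\<forall>b. length b = l \<longrightarrow> P m (\<lambda>i. holds M k \<phi> (a (j i)) b)))"
  proof (intro allI impI)
    fix a :: "nat \<Rightarrow> 'm list" assume "\<forall>i. length (a i) = k"
    then obtain j m where "strict_mono j" "\<forall>b. length b = l \<longrightarrow>
        finite (sign_changes (\<lambda>i. holds M k \<phi> (a (j i)) b)) \<and>
        card (sign_changes (\<lambda>i. holds M k \<phi> (a (j i)) b)) \<le> m"
      using NIP_imp_bounded_sign_changes[OF mon wf fv \<open>NIP M k l \<phi>\<close>] by blast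
    then show "\<exists>j m. strict_mono j \<and> (\<forall>b. length b = l \<longrightarrow> P m (\<lambda>i. holds M k \<phi> (a (j i)) b))"
      using bounded_P by blast
  qed
next
  assume uniform: "\<forall>a :: nat \<Rightarrow> 'm list. (\<forall>i. length (a i) = k) \<longrightarrow>
      (\<exists>j m. strict_mono j \<and> (\<forall>b. length b = l \<longrightarrow> P m (\<lambda>i. holds M k \<phi> (a (j i)) b)))"
  show "NIP M k l \<phi>"
  proof (rule ccontr)
    assume "\<not> NIP M k l \<phi>"
    then obtain a :: "nat \<Rightarrow> 'm list" where a: "\<forall>i. length (a i) = k"
      "\<forall>j :: nat \<Rightarrow> nat. strict_mono j \<longrightarrow> (\<exists>b. length b = l \<and> (\<forall>i. holds M k \<phi> (a (j i)) b = even i))"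
      using not_NIP_imp_alternating by blast
    obtain j m where j: "strict_mono j" "\<forall>b. length b = l \<longrightarrow> P m (\<lambda>i. holds M k \<phi> (a (j i)) b)"
      using uniform a(1) by blast
    obtain b where "length b = l" "\<forall>i. holds M k \<phi> (a (j i)) b = even i"
      using a(2) j(1) by blast
    moreover have "(\<lambda>i. holds M k \<phi> (a (j i)) b) = even" if "\<forall>i. holds M k \<phi> (a (j i)) b = even i"
      using that by (simp add: fun_eq_iff)
    ultimately show False
      using j(2) not_P_even[of m] by auto
  qed
qed

lemma continuous_map_phi_type_eval:
  assumes "x \<in> A"
  shows "continuous_map (phi_type_space M k l \<phi> A) (discrete_topology UNIV) (\<lambda>q. q x)"
  unfolding phi_type_space_def
  using continuous_map_product_projection[OF assms, of "\<lambda>_. discrete_topology UNIV"]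
  by (intro continuous_map_from_subtopology) simp

lemma phi_type_finitely_realized:
  assumes "q \<in> topspace (phi_type_space M k l \<phi> A)" "F \<subseteq> A" "finite F"
  shows "\<exists>b. length b = l \<and> (\<forall>x\<in>F. q x = holds M k \<phi> x b)"
  using assms unfolding phi_type_space_def phi_types_def by auto

lemma realized_phi_type:
  assumes "length b = l"
  shows "restrict (\<lambda>x. holds M k \<phi> x b) A \<in> topspace (phi_type_space M k l \<phi> A)"
  using assms unfolding phi_type_space_def phi_types_def by auto

lemma phi_type_sign_changes_bounded:
  assumes q: "q \<in> topspace (phi_type_space M k l \<phi> (range c))"
    and bound: "\<And>b. length b = l \<Longrightarrow> finite (sign_changes (\<lambda>i. holds M k \<phi> (c i) b)) \<and>
      card (sign_changes (\<lambda>i. holds M k \<phi> (c i) b)) \<le> m"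
  shows "finite (sign_changes (\<lambda>i. q (c i))) \<and> card (sign_changes (\<lambda>i. q (c i))) \<le> m"
proof (rule bounded_sign_changes_if_finite_subsets)
  fix F assume F: "F \<subseteq> sign_changes (\<lambda>i. q (c i))" "finite F"
  then obtain b where b: "length b = l" "\<forall>x\<in>c ` (F \<union> Suc ` F). q x = holds M k \<phi> x b"
    using phi_type_finitely_realized[OF q, of "c ` (F \<union> Suc ` F)"] by blast
  then have "F \<subseteq> sign_changes (\<lambda>i. holds M k \<phi> (c i) b)"
    using F(1) by (auto simp: sign_changes_def)
  then show "card F \<le> m"
    using bound[OF b(1)] card_mono le_trans by blast
qed

lemma NIP_imp_DBSC_limit:
  fixes M :: "('f, 'r, 'm) struc" and a :: "nat \<Rightarrow> 'm list"
  assumes mon: "monster fa ra M" and wf: "wf_fm fa ra \<phi>" and fv: "fv \<phi> \<subseteq> {..<k + l}"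
    and nip: "NIP M k l \<phi>" and lengths: "\<forall>i. length (a i) = k"
  shows "\<exists>j f. strict_mono j \<and> (let X = phi_type_space M k l \<phi> (range (a \<circ> j))
    in (\<forall>q \<in> topspace X. (\<lambda>i. (of_bool (q (a (j i))) :: real)) \<longlonglongrightarrow> f q) \<and> DBSC X f)"
proof -
  obtain j m where j: "strict_mono j" and bound: "\<forall>b. length b = l \<longrightarrow>
      finite (sign_changes (\<lambda>i. holds M k \<phi> (a (j i)) b)) \<and>
      card (sign_changes (\<lambda>i. holds M k \<phi> (a (j i)) b)) \<le> m"
    using NIP_imp_bounded_sign_changes[OF mon wf fv nip lengths] by blast
  define X where "X = phi_type_space M k l \<phi> (range (a \<circ> j))"
  have "\<exists>f. (\<forall>q\<in>topspace X. (\<lambda>i. (of_bool (q (a (j i))) :: real)) \<longlonglongrightarrow> f q) \<and> DBSC X f"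
  proof (rule DBSC_limit_if_bounded_sign_changes)
    show "continuous_map X (discrete_topology UNIV) (\<lambda>q. q (a (j i)))" for i
      unfolding X_def by (rule continuous_map_phi_type_eval) simp
    show "finite (sign_changes (\<lambda>i. q (a (j i)))) \<and> card (sign_changes (\<lambda>i. q (a (j i)))) \<le> m"
      if "q \<in> topspace X" for q
      using phi_type_sign_changes_bounded[of q M k l \<phi> "a \<circ> j" m] that bound
      unfolding X_def by simp
  qed
  then show ?thesis
    using j unfolding X_def Let_def by blast
qed

lemma NIP_iff_DBSC_limit:
  fixes M :: "('f, 'r, 'm) struc"
  assumes mon: "monster fa ra M" and wf: "wf_fm fa ra \<phi>" and fv: "fv \<phi> \<subseteq> {..<k + l}"
  shows "NIP M k l \<phi> \<longleftrightarrow> (\<forall>a :: nat \<Rightarrow> 'm list. (\<forall>i. length (a i) = k) \<longrightarrow>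
    (\<exists>j f. strict_mono j \<and> (let X = phi_type_space M k l \<phi> (range (a \<circ> j))
      in (\<forall>q \<in> topspace X. (\<lambda>i. (of_bool (q (a (j i))) :: real)) \<longlonglongrightarrow> f q) \<and> DBSC X f)))"
proof
  assume "NIP M k l \<phi>"
  then show "\<forall>a :: nat \<Rightarrow> 'm list. (\<forall>i. length (a i) = k) \<longrightarrow>
    (\<exists>j f. strict_mono j \<and> (let X = phi_type_space M k l \<phi> (range (a \<circ> j))
      in (\<forall>q \<in> topspace X. (\<lambda>i. (of_bool (q (a (j i))) :: real)) \<longlonglongrightarrow> f q) \<and> DBSC X f))"
    using NIP_imp_DBSC_limit[OF mon wf fv] by blast
next
  assume limit: "\<forall>a :: nat \<Rightarrow> 'm list. (\<forall>i. length (a i) = k) \<longrightarrow>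
    (\<exists>j f. strict_mono j \<and> (let X = phi_type_space M k l \<phi> (range (a \<circ> j))
      in (\<forall>q \<in> topspace X. (\<lambda>i. (of_bool (q (a (j i))) :: real)) \<longlonglongrightarrow> f q) \<and> DBSC X f))"
  show "NIP M k l \<phi>"
  proof (rule ccontr)
    assume "\<not> NIP M k l \<phi>"
    then obtain a :: "nat \<Rightarrow> 'm list" where a: "\<forall>i. length (a i) = k"
      "\<forall>j :: nat \<Rightarrow> nat. strict_mono j \<longrightarrow> (\<exists>b. length b = l \<and> (\<forall>i. holds M k \<phi> (a (j i)) b = even i))"
      using not_NIP_imp_alternating by blast
    obtain j f where j: "strict_mono j"
      "\<forall>q \<in> topspace (phi_type_space M k l \<phi> (range (a \<circ> j))).
        (\<lambda>i. (of_bool (q (a (j i))) :: real)) \<longlonglongrightarrow> f q"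
      using limit a(1) unfolding Let_def by blast
    obtain b where b: "length b = l" "\<forall>i. holds M k \<phi> (a (j i)) b = even i"
      using a(2) j(1) by blast
    \<comment> \<open>the type realized by b is a point at which the sequence alternates\<close>
    define q where "q = restrict (\<lambda>x. holds M k \<phi> x b) (range (a \<circ> j))"
    have "(\<lambda>i. (of_bool (q (a (j i))) :: real)) \<longlonglongrightarrow> f q"
      using j(2) realized_phi_type[OF b(1)] unfolding q_def by blast
    moreover have "(\<lambda>i. (of_bool (q (a (j i))) :: real)) = (\<lambda>i. of_bool (even i))"
      using b(2) by (simp add: q_def)
    ultimately show False
      using alternating_not_convergent by simp
  qed
qed

lemma NIP_iff_eventually_constant:
  fixes M :: "('f, 'r, 'm) struc"
  assumes "monster fa ra M" and "wf_fm fa ra \<phi>" and "fv \<phi> \<subseteq> {..<k + l}"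
  shows "NIP M k l \<phi> \<longleftrightarrow> (\<forall>a :: nat \<Rightarrow> 'm list. (\<forall>i. length (a i) = k) \<longrightarrow>
    (\<exists>j :: nat \<Rightarrow> nat. strict_mono j \<and> (\<forall>b. length b = l \<longrightarrow>
      (\<exists>n. \<forall>i\<ge>n. holds M k \<phi> (a (j i)) b = holds M k \<phi> (a (j n)) b))))"
proof -
  have "\<not> (\<exists>n :: nat. \<forall>i\<ge>n. even i = even n)"
  proof
    assume "\<exists>n :: nat. \<forall>i\<ge>n. even i = even n"
    then obtain n :: nat where "even (Suc n) = even n"
      using le_SucI by blast
    then show False
      by simp
  qed
  then show ?thesis
    using NIP_iff_subsequence_property[OF assms, where P = "\<lambda>_ g. \<exists>n. \<forall>i\<ge>n. g i = g n"]
      eventually_constant_if_finite_sign_changes by simp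
qed

lemma NIP_iff_bounded_variation:
  fixes M :: "('f, 'r, 'm) struc"
  assumes "monster fa ra M" and "wf_fm fa ra \<phi>" and "fv \<phi> \<subseteq> {..<k + l}"
  shows "NIP M k l \<phi> \<longleftrightarrow> (\<forall>a :: nat \<Rightarrow> 'm list. (\<forall>i. length (a i) = k) \<longrightarrow>
    (\<exists>j (N :: nat). strict_mono j \<and> (\<forall>b. length b = l \<longrightarrow>
      (let t = (\<lambda>i. \<bar>(of_bool (holds M k \<phi> (a (j i)) b) :: real) - of_bool (holds M k \<phi> (a (j (Suc i))) b)\<bar>)
       in summable (\<lambda>i. t (Suc i)) \<and> (\<Sum>i. t (Suc i)) \<le> real N))))"
proof -
  have "(\<lambda>i. \<bar>(of_bool (even (Suc i)) :: real) - of_bool (even (Suc (Suc i)))\<bar>) = (\<lambda>i. 1)"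
    by auto
  then have "\<not> summable (\<lambda>i. \<bar>(of_bool (even (Suc i)) :: real) - of_bool (even (Suc (Suc i)))\<bar>)"
    using summable_const_iff[of "1 :: real"] by simp
  then show ?thesis
    using NIP_iff_subsequence_property[OF assms, where P = "\<lambda>N g. let t = (\<lambda>i. \<bar>(of_bool (g i) :: real)
      - of_bool (g (Suc i))\<bar>) in summable (\<lambda>i. t (Suc i)) \<and> (\<Sum>i. t (Suc i)) \<le> real N"]
      tail_variation_bounded by (simp add: Let_def)
qed

theorem proposition2p13:
  fixes fa :: "'f \<Rightarrow> nat" and ra :: "'r \<Rightarrow> nat"
    and M :: "('f, 'r, 'm) struc" and \<phi> :: "('f, 'r) fm" and k l :: nat
  assumes "monster fa ra M"
    and "wf_fm fa ra \<phi>" and "fv \<phi> \<subseteq> {..<k + l}"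
  shows
   "(NIP M k l \<phi> \<longleftrightarrow>
      (\<forall>a :: nat \<Rightarrow> 'm list. (\<forall>i. length (a i) = k) \<longrightarrow>
         (\<exists>j :: nat \<Rightarrow> nat. strict_mono j \<and>
            (\<forall>b. length b = l \<longrightarrow>
               (\<exists>n. \<forall>i\<ge>n. holds M k \<phi> (a (j i)) b = holds M k \<phi> (a (j n)) b)))))
  \<and> (NIP M k l \<phi> \<longleftrightarrow>
      (\<forall>a :: nat \<Rightarrow> 'm list. (\<forall>i. length (a i) = k) \<longrightarrow>
         (\<exists>j (N :: nat). strict_mono j \<and>
            (\<forall>b. length b = l \<longrightarrow>
               (let t = (\<lambda>i. \<bar>(of_bool (holds M k \<phi> (a (j i)) b) :: real)
                              - of_bool (holds M k \<phi> (a (j (Suc i))) b)\<bar>)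
                in summable (\<lambda>i. t (Suc i)) \<and> (\<Sum>i. t (Suc i)) \<le> real N)))))
  \<and> (NIP M k l \<phi> \<longleftrightarrow>
      (\<forall>a :: nat \<Rightarrow> 'm list. (\<forall>i. length (a i) = k) \<longrightarrow>
         (\<exists>j f. strict_mono j \<and>
            (let X = phi_type_space M k l \<phi> (range (a \<circ> j))
             in (\<forall>q \<in> topspace X.
                   (\<lambda>i. (of_bool (q (a (j i))) :: real)) \<longlonglongrightarrow> f q)
                \<and> DBSC X f))))"
  by (intro conjI NIP_iff_eventually_constant[OF assms] NIP_iff_bounded_variation[OF assms]
      NIP_iff_DBSC_limit[OF assms])

end
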